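(* Let $q\ge2$, let $r$ be a positive integer, and let $f$ be a positive function on the nonnegative integers that is $q$-quasimultiplicative with parameter $r$ (i.e. $f(q^{k+r}a+b)=f(a)f(b)$ for all $a,b,k\ge0$ with $0\le b<q^k$) and has at most polynomial growth ($f(n)=O(n^c)$ and $f(n)=\Omega(n^{-c})$ for a fixed $c\ge0$). Let $\mathcal{B}$, $\ell$, $B(x,t)=\sum_{n\in\mathcal{B}}x^{\ell(n)}f(n)^t$ and $F(x,t)=\sum_{k\ge0}x^k\sum_{0\le n<q^k}f(n)^t$ be as in the context. Then there exist positive constants $\delta,\epsilon$ and functions $\alpha,\kappa$, analytic for $|t|\le\delta$ with $\kappa(t)\ne0$ there, such that for $|t|\le\delta$, $\alpha(t)$ is a solution of $x+x^rB(x,t)=1$ of modulus less than the radius of convergence of $B(\cdot,t)$, this equation has no other solutions of modulus $\le(1+\epsilon)|\alpha(t)|$, and $$[x^k]F(x,t)=\kappa(t)\,\alpha(t)^{-k}\bigl(1+O((1+\epsilon)^{-k})\bigr)$$ uniformly in $t$ with $|t|\le\delta$.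
   Context: $\mathcal{B}$ is the set of positive integers not divisible by $q$ whose $q$-ary representation (without leading zeros) does not contain the block $0^r$ of $r$ consecutive zeros; $\ell(n)$ is the length of the $q$-ary representation of $n$; for complex $t$, $f(n)^t=e^{t\log f(n)}$; $[x^k]$ denotes the coefficient of $x^k$. *)

theory Defs
  imports "HOL-Analysis.Analysis" "HOL-Library.Landau_Symbols"
begin

text \<open>Length of the q-ary representation of n (0 has the empty representation).\<close>
definition qlen :: "nat \<Rightarrow> nat \<Rightarrow> nat" where
  "qlen q n = (LEAST k. n < q ^ k)"

definition qdigit :: "nat \<Rightarrow> nat \<Rightarrow> nat \<Rightarrow> nat" where
  "qdigit q n i = n div q ^ i mod q"

definition has_zero_block :: "nat \<Rightarrow> nat \<Rightarrow> nat \<Rightarrow> bool" where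
  "has_zero_block q r n = (\<exists>j. j + r \<le> qlen q n \<and> (\<forall>i<r. qdigit q n (j + i) = 0))"

definition Bset :: "nat \<Rightarrow> nat \<Rightarrow> nat set" where
  "Bset q r = {n. 0 < n \<and> \<not> q dvd n \<and> \<not> has_zero_block q r n}"

definition quasimult :: "nat \<Rightarrow> nat \<Rightarrow> (nat \<Rightarrow> real) \<Rightarrow> bool" where
  "quasimult q r f = (\<forall>a b k. b < q ^ k \<longrightarrow> f (q ^ (k + r) * a + b) = f a * f b)"

definition fpow :: "(nat \<Rightarrow> real) \<Rightarrow> nat \<Rightarrow> complex \<Rightarrow> complex" where
  "fpow f n t = exp (t * of_real (ln (f n)))"

text \<open>Coefficient of x^k in B(x,t) = sum over n in B of x^l(n) f(n)^t.\<close>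
definition Bcoef :: "nat \<Rightarrow> nat \<Rightarrow> (nat \<Rightarrow> real) \<Rightarrow> complex \<Rightarrow> nat \<Rightarrow> complex" where
  "Bcoef q r f t k = (\<Sum>n \<in> {n \<in> Bset q r. qlen q n = k}. fpow f n t)"

definition Bfun :: "nat \<Rightarrow> nat \<Rightarrow> (nat \<Rightarrow> real) \<Rightarrow> complex \<Rightarrow> complex \<Rightarrow> complex" where
  "Bfun q r f x t = (\<Sum>k. Bcoef q r f t k * x ^ k)"

definition Fcoef :: "nat \<Rightarrow> (nat \<Rightarrow> real) \<Rightarrow> complex \<Rightarrow> nat \<Rightarrow> complex" where
  "Fcoef q f t k = (\<Sum>n<q ^ k. fpow f n t)"

end

theory Submission
  imports Defs "HOL-Complex_Analysis.Complex_Analysis"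
begin

(* Write Q(x,t) = 1 - x - x^r B(x,t). Splitting each n with q^(k-1) <= n < q^k at its most
   significant block of r zeros, or at its trailing zeros if it has none, and using
   quasimultiplicativity gives F(x,t) Q(x,t) = 1 + G(x,t), where G collects the numbers without
   such a block. Block-free digit strings are exponentially rarer than all strings, so the
   coefficients of B and G grow at most like gam^k with gam < q, uniformly for small |t|; hence Q
   and G are analytic on a disc of radius 1/gam > 1/q. At t = 0 one has Q = (1 + G)(1 - q x),
   so 1/q is a simple root and the only root of modulus at most 1/q. A Newton contraction gives a
   unique root alpha(t) near 1/q, and compactness keeps Q away from 0 on the rest of a slightly
   larger disc. Then Q = S (1 - x/alpha) with S zero-free there, so F = T/(1 - x/alpha) with
   T = (1 + G)/S analytic beyond |alpha|, and Cauchy's estimates for the coefficients of T give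
   the expansion with kappa = T(alpha). Finally alpha and kappa are analytic in t as uniform
   limits of F_k/F_(k+1) and F_k alpha^k. *)

section \<open>Estimates for power series and holomorphic functions\<close>

lemma norm_sum_le_card_mult:
  fixes g :: "'b \<Rightarrow> 'a::real_normed_vector"
  assumes "finite Sx" "\<And>a. a \<in> Sx \<Longrightarrow> norm (g a) \<le> B"
  shows "norm (sum g Sx) \<le> real (card Sx) * B"
proof -
  have "norm (sum g Sx) \<le> (\<Sum>a\<in>Sx. norm (g a))" by (rule norm_sum)
  also have "\<dots> \<le> real (card Sx) * B" using assms(2) by (rule sum_bounded_above)
  finally show ?thesis .
qed

lemma norm_exp_minus_one: "norm (exp (z::complex) - 1) \<le> norm z * exp (norm z)"
proof -
  have "norm (exp z - exp 0) \<le> exp (norm z) * norm (z - 0)"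
  proof (rule field_differentiable_bound[of "closed_segment 0 z" exp exp])
    show "convex (closed_segment 0 z)" by simp
    show "(exp has_field_derivative exp w) (at w within closed_segment 0 z)" for w
      by (rule DERIV_exp[THEN has_field_derivative_at_within])
    show "norm (exp w) \<le> exp (norm z)" if "w \<in> closed_segment 0 z" for w
    proof -
      have "norm w \<le> norm z" using that segment_bound by (metis diff_zero norm_minus_commute)
      hence "Re w \<le> norm z" using complex_Re_le_cmod order_trans by blast
      thus ?thesis by simp
    qed
  qed auto
  thus ?thesis by (simp add: mult.commute)
qed

lemma powser_geometric_bound:
  fixes c :: "nat \<Rightarrow> complex"
  assumes cb: "\<And>k. norm (c k) \<le> A * g^k" and g: "g \<ge> 0" and x: "norm x \<le> \<rho>" and gr: "g * \<rho> < 1"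
  shows "summable (\<lambda>k. c k * x^k)" "norm (\<Sum>k. c k * x^k) \<le> A / (1 - g*\<rho>)"
proof -
  have r0: "\<rho> \<ge> 0" using x norm_ge_zero order_trans by blast
  have gr0: "g * \<rho> \<ge> 0" using g r0 by simp
  have b: "norm (c k * x^k) \<le> A * (g*\<rho>)^k" for k
  proof -
    have Ag: "0 \<le> A * g^k" using order_trans[OF norm_ge_zero cb[of k]] .
    have "norm (c k * x^k) = norm (c k) * norm x ^ k" by (simp add: norm_mult norm_power)
    also have "\<dots> \<le> (A * g^k) * \<rho>^k" using Ag by (intro mult_mono[OF cb power_mono[OF x]]) auto
    also have "\<dots> = A * (g*\<rho>)^k" by (simp add: power_mult_distrib)
    finally show ?thesis .
  qed
  have sg: "summable (\<lambda>k. A * (g*\<rho>)^k)" using gr gr0 by (intro summable_mult summable_geometric) simp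
  have sn: "summable (\<lambda>k. norm (c k * x^k))" by (rule summable_comparison_test'[OF sg]) (use b in auto)
  show "summable (\<lambda>k. c k * x^k)" using sn by (rule summable_norm_cancel)
  have "norm (\<Sum>k. c k * x^k) \<le> (\<Sum>k. norm (c k * x^k))" by (rule summable_norm[OF sn])
  also have "\<dots> \<le> (\<Sum>k. A * (g*\<rho>)^k)" by (rule suminf_le[OF b sn sg])
  also have "\<dots> = A * (\<Sum>k. (g*\<rho>)^k)" using gr gr0 by (subst suminf_mult) (auto intro: summable_geometric)
  also have "\<dots> = A / (1 - g*\<rho>)" using gr gr0 by (subst suminf_geometric) (auto simp: divide_simps)
  finally show "norm (\<Sum>k. c k * x^k) \<le> A / (1 - g*\<rho>)" .
qed

lemma conv_radius_ge_geometric: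
  fixes c :: "nat \<Rightarrow> complex"
  assumes cb: "\<And>k. norm (c k) \<le> A * g^k" and g: "g > 0"
  shows "ereal (1/g) \<le> conv_radius c"
proof (rule conv_radius_geI_ex')
  fix \<rho> :: real assume "0 < \<rho>" "ereal \<rho> < ereal (1/g)"
  hence "g * \<rho> < 1" using g by (simp add: field_simps)
  thus "summable (\<lambda>n. c n * of_real \<rho> ^ n)"
    using powser_geometric_bound(1)[OF cb, of "of_real \<rho>" \<rho>] g \<open>0 < \<rho>\<close> by simp
qed

lemma fps_conv_radius_const_X: "fps_conv_radius (fps_const (c::complex) * fps_X) = \<infinity>"
  by (cases "c = 0") (simp_all add: fps_conv_radius_cmult_left)

lemma fps_conv_radius_linear: "fps_conv_radius (1 - fps_const (c::complex) * fps_X) = \<infinity>"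
  using fps_conv_radius_diff[of 1 "fps_const c * fps_X"] fps_conv_radius_const_X[of c] by simp

lemma radial_retraction:
  fixes x :: complex and \<rho> :: real
  assumes "0 < \<rho>" "\<rho> < norm x"
  shows "norm (x * of_real (\<rho> / norm x)) = \<rho>" "dist x (x * of_real (\<rho> / norm x)) = norm x - \<rho>"
proof -
  have x: "norm x > 0" using assms by linarith
  have "norm (x * of_real (\<rho> / norm x)) = norm x * \<bar>\<rho> / norm x\<bar>" by (simp only: norm_mult norm_of_real)
  thus "norm (x * of_real (\<rho> / norm x)) = \<rho>" using assms x by simp
  have "x - x * of_real (\<rho> / norm x) = x * of_real (1 - \<rho> / norm x)" by (simp add: algebra_simps)
  hence "norm (x - x * of_real (\<rho> / norm x)) = norm x * \<bar>1 - \<rho> / norm x\<bar>" by (simp only: norm_mult norm_of_real)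
  moreover have "\<bar>1 - \<rho> / norm x\<bar> = 1 - \<rho> / norm x" using assms x by simp
  ultimately show "dist x (x * of_real (\<rho> / norm x)) = norm x - \<rho>"
    using x by (simp add: dist_norm field_simps)
qed

lemma complex_sum_one_real:
  fixes a b :: complex
  assumes s: "a + b = 1" and n: "norm a + norm b \<le> 1"
  shows "Im a = 0" "0 \<le> Re a"
proof -
  have b: "b = 1 - a" using s by (auto simp: algebra_simps)
  have nb: "norm b \<ge> \<bar>1 - Re a\<bar>" using abs_Re_le_cmod[of b] b by simp
  have na: "norm a \<ge> \<bar>Re a\<bar>" by (rule abs_Re_le_cmod)
  show "Im a = 0"
  proof (rule ccontr)
    assume "Im a \<noteq> 0"
    hence "(Re a)\<^sup>2 < (Re a)\<^sup>2 + (Im a)\<^sup>2" by simp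
    hence "sqrt ((Re a)\<^sup>2) < sqrt ((Re a)\<^sup>2 + (Im a)\<^sup>2)" by (rule real_sqrt_less_mono)
    hence "norm a > \<bar>Re a\<bar>" by (simp add: cmod_def)
    thus False using nb n by linarith
  qed
  show "0 \<le> Re a" using na nb n by linarith
qed

lemma Cauchy_inequality_ball:
  fixes f :: "complex \<Rightarrow> complex"
  assumes hol: "f holomorphic_on ball 0 Rbig" and w: "norm w + rc \<le> RR" and RR: "RR < Rbig" and rc: "rc > 0"
    and B: "\<And>x. norm x \<le> RR \<Longrightarrow> norm (f x) \<le> B"
  shows "norm ((deriv ^^ n) f w) \<le> fact n * B / rc ^ n"
proof (rule Cauchy_inequality)
  have sub: "cball w rc \<subseteq> ball 0 Rbig"
  proof
    fix x assume "x \<in> cball w rc"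
    hence "norm x \<le> norm w + rc" using norm_triangle_sub[of x w] by (auto simp: dist_norm norm_minus_commute)
    thus "x \<in> ball 0 Rbig" using w RR by simp
  qed
  show "f holomorphic_on ball w rc" using hol by (rule holomorphic_on_subset) (use sub in auto)
  show "continuous_on (cball w rc) f" using holomorphic_on_imp_continuous_on[OF hol] sub
    by (rule continuous_on_subset)
  show "0 < rc" by fact
  fix x assume "norm (w - x) = rc"
  hence "norm x \<le> RR" using w norm_triangle_sub[of x w] by (simp add: norm_minus_commute)
  thus "norm (f x) \<le> B" by (rule B)
qed

lemma uniform_limit_geometric_rate:
  fixes F :: "nat \<Rightarrow> complex \<Rightarrow> complex"
  assumes b: "\<And>k t. k \<ge> K \<Longrightarrow> t \<in> Sx \<Longrightarrow> norm (F k t - g t) \<le> B * bb ^ k"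
    and bb: "0 \<le> bb" "bb < 1"
  shows "uniform_limit Sx F g sequentially"
proof (rule uniform_limitI)
  fix e :: real assume e: "e > 0"
  have "(\<lambda>k. B * bb ^ k) \<longlonglongrightarrow> B * 0" using bb by (intro tendsto_mult tendsto_const LIMSEQ_power_zero) auto
  hence "eventually (\<lambda>k. B * bb ^ k < e) sequentially" using e by (auto dest: order_tendstoD(2))
  moreover have "eventually (\<lambda>k. k \<ge> K) sequentially" by (rule eventually_ge_at_top)
  ultimately show "eventually (\<lambda>k. \<forall>t\<in>Sx. dist (F k t) (g t) < e) sequentially"
  proof (rule eventually_elim2)
    fix k assume "B * bb ^ k < e" "k \<ge> K"
    thus "\<forall>t\<in>Sx. dist (F k t) (g t) < e" using b by (force simp: dist_norm)
  qed
qed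

section \<open>Digit strings and blocks of zeros\<close>

lemma digits_zero_iff_dvd:
  fixes q x :: nat assumes "q > 0"
  shows "(\<forall>i<r. x div q^i mod q = 0) \<longleftrightarrow> q^r dvd x"
proof (induction r)
  case 0 then show ?case by simp
next
  case (Suc r)
  have "(\<forall>i<Suc r. x div q^i mod q = 0) \<longleftrightarrow> (\<forall>i<r. x div q^i mod q = 0) \<and> x div q^r mod q = 0"
    using less_Suc_eq by auto
  also have "\<dots> \<longleftrightarrow> q^r dvd x \<and> q dvd x div q^r" using Suc by (simp add: dvd_eq_mod_eq_0)
  also have "\<dots> \<longleftrightarrow> q^Suc r dvd x"
  proof
    assume h: "q^r dvd x \<and> q dvd x div q^r"
    then obtain y where y: "x = q^r * y" by blast
    with h assms have "q dvd y" by simp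
    then show "q^Suc r dvd x" using y by (simp add: mult_dvd_mono)
  next
    assume h: "q^Suc r dvd x"
    then obtain y where y: "x = q^Suc r * y" by blast
    then show "q^r dvd x \<and> q dvd x div q^r" using assms by (simp add: mult.assoc)
  qed
  finally show ?case .
qed

lemma digit_zero_of_power_dvd: "q > 0 \<Longrightarrow> q^r dvd (x::nat) \<Longrightarrow> i < r \<Longrightarrow> x div q^i mod q = 0"
  using digits_zero_iff_dvd by blast

lemma has_zero_block_iff_dvd: "q > 0 \<Longrightarrow> has_zero_block q r n \<longleftrightarrow> (\<exists>j. j + r \<le> qlen q n \<and> q^r dvd n div q^j)"
proof -
  assume q: "q > 0"
  have "\<And>j. (\<forall>i<r. qdigit q n (j+i) = 0) \<longleftrightarrow> q^r dvd n div q^j"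
    unfolding qdigit_def using digits_zero_iff_dvd[OF q, of r] by (simp add: power_add div_mult2_eq)
  thus ?thesis unfolding has_zero_block_def by simp
qed

locale qary = fixes q :: nat assumes q2: "q \<ge> 2"
begin

lemma q_pos: "q > 0" using q2 by simp

lemma less_power_mono: "b < q^m \<Longrightarrow> m \<le> M \<Longrightarrow> b < q^M"
  using power_increasing[of m M q] q2 by (meson less_le_trans one_le_numeral order_trans)

lemma less_q_power_self: "n < q^n"
proof -
  have "n < 2^n" by (rule less_exp)
  also have "\<dots> \<le> q^n" using q2 by (simp add: power_mono)
  finally show ?thesis .
qed

lemma less_q_power_qlen: "n < q^(qlen q n)"
  unfolding qlen_def by (rule LeastI[of _ n]) (rule less_q_power_self)

lemma qlen_le_of_less: "n < q^k \<Longrightarrow> qlen q n \<le> k"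
  unfolding qlen_def by (rule Least_le)

lemma qlen_eqI: assumes "k \<ge> 1" "q^(k-1) \<le> n" "n < q^k" shows "qlen q n = k"
proof -
  have "qlen q n \<le> k" using assms by (intro qlen_le_of_less)
  moreover have "\<not> qlen q n \<le> k - 1"
  proof
    assume "qlen q n \<le> k - 1"
    hence "q^(qlen q n) \<le> q^(k-1)" using q2 by (intro power_increasing) auto
    with less_q_power_qlen[of n] assms show False by linarith
  qed
  ultimately show ?thesis by linarith
qed

lemma qlen_0 [simp]: "qlen q 0 = 0"
  using qlen_le_of_less[of 0 0] by simp

lemma qlen_lower: assumes "n > 0" shows "qlen q n \<ge> 1" "q^(qlen q n - 1) \<le> n"
proof -
  show 1: "qlen q n \<ge> 1"
  proof (rule ccontr)
    assume "\<not> qlen q n \<ge> 1" hence "qlen q n = 0" by simp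
    with less_q_power_qlen[of n] assms show False by simp
  qed
  show "q^(qlen q n - 1) \<le> n"
  proof (rule ccontr)
    assume "\<not> q^(qlen q n - 1) \<le> n"
    hence "qlen q n \<le> qlen q n - 1" by (intro qlen_le_of_less) simp
    with 1 show False by simp
  qed
qed

lemma qlen_iff: "k \<ge> 1 \<Longrightarrow> qlen q n = k \<longleftrightarrow> q^(k-1) \<le> n \<and> n < q^k"
proof
  assume "k \<ge> 1" "qlen q n = k"
  moreover from this have "n > 0" by (cases "n = 0") auto
  ultimately show "q^(k-1) \<le> n \<and> n < q^k" using qlen_lower[of n] less_q_power_qlen[of n] by auto
qed (auto intro: qlen_eqI)

lemma qlen_concat: assumes "a > 0" "b < q^s" shows "qlen q (q^s * a + b) = s + qlen q a"
proof -
  let ?l = "qlen q a"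
  have l1: "?l \<ge> 1" and la: "q^(?l - 1) \<le> a" using qlen_lower assms by auto
  have au: "a + 1 \<le> q^?l" using less_q_power_qlen[of a] by simp
  have "q^(s + ?l - 1) = q^s * q^(?l - 1)" using l1 by (simp add: power_add[symmetric])
  also have "\<dots> \<le> q^s * a" using la by simp
  finally have lo: "q^(s + ?l - 1) \<le> q^s * a + b" by linarith
  have "q^s * a + b < q^s * a + q^s" using assms by simp
  also have "\<dots> = q^s * (a + 1)" by simp
  also have "\<dots> \<le> q^s * q^?l" using au mult_le_mono2 by blast
  finally have hi: "q^s * a + b < q^(s + ?l)" by (simp add: power_add)
  show ?thesis using lo hi l1 by (intro qlen_eqI) auto
qed

end

locale qary_blocks = qary + fixes r :: nat assumes r1: "r \<ge> 1"
begin

definition Blen :: "nat \<Rightarrow> nat set" where "Blen l = {a \<in> Bset q r. qlen q a = l}"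

lemma Blen_subset: "Blen l \<subseteq> {..<q^l}"
  unfolding Blen_def using less_q_power_qlen by auto

lemma finite_Blen [simp]: "finite (Blen l)"
  using Blen_subset finite_subset by blast

lemma Blen_0 [simp]: "Blen 0 = {}"
proof -
  have "a \<notin> Blen 0" for a
  proof
    assume "a \<in> Blen 0"
    hence "a > 0" "qlen q a = 0" unfolding Blen_def Bset_def by auto
    with qlen_lower(1)[of a] show False by simp
  qed
  thus ?thesis by blast
qed

lemma Bset_iff_dvd: "a \<in> Bset q r \<longleftrightarrow> a > 0 \<and> \<not> q dvd a \<and> \<not>(\<exists>j. j + r \<le> qlen q a \<and> q^r dvd a div q^j)"
  by (simp only: Bset_def mem_Collect_eq has_zero_block_iff_dvd[OF q_pos])

lemma concat_div: assumes "b < q^m" shows "(q^(m+r) * a + b) div q^(m+r) = a"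
proof -
  have "b < q^(m+r)" using assms by (rule less_power_mono) simp
  thus ?thesis using q_pos by simp
qed

lemma zero_block_in_concat:
  assumes a: "a \<in> Bset q r" and b: "b < q^m" and n: "n = q^(m+r) * a + b"
    and blk: "q^r dvd n div q^p" and pk: "p + r \<le> qlen q n"
  shows "p \<le> m"
proof (rule ccontr)
  assume "\<not> p \<le> m" hence pm: "p > m" by simp
  have apos: "a > 0" and anq: "\<not> q dvd a" and anb: "\<not>(\<exists>j. j + r \<le> qlen q a \<and> q^r dvd a div q^j)"
    using a Bset_iff_dvd by auto
  have nd: "n div q^(m+r) = a" using concat_div[OF b] n by simp
  have bmr: "b < q^(m+r)" using b by (rule less_power_mono) simp
  have ql: "qlen q n = m + r + qlen q a"
    using qlen_concat[OF apos bmr] n by simp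
  show False
  proof (cases "p \<ge> m + r")
    case True
    have "q^p = q^(m+r) * q^(p-(m+r))" using True by (simp add: power_add[symmetric])
    hence "n div q^p = a div q^(p - (m+r))"
      using nd by (simp add: div_mult2_eq)
    hence "q^r dvd a div q^(p - (m+r))" using blk by simp
    moreover have "p - (m+r) + r \<le> qlen q a" using pk ql True by linarith
    ultimately show False using anb by blast
  next
    case False
    have "(n div q^p) div q^(m + r - p) mod q = 0"
      using digit_zero_of_power_dvd[OF q_pos blk] False pm by simp
    moreover have "(n div q^p) div q^(m + r - p) = n div q^(m+r)"
      using False pm by (metis div_mult2_eq le_add_diff_inverse less_or_eq_imp_le not_le power_add)
    ultimately have "a mod q = 0" using nd by simp
    with anq show False by (simp add: dvd_eq_mod_eq_0)
  qed
qed

lemma no_zero_block_shifted: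
  assumes a: "a \<in> Bset q r" and j: "j < r" and n: "n = q^j * a"
    and blk: "q^r dvd n div q^p" and pk: "p + r \<le> qlen q n"
  shows False
proof -
  have apos: "a > 0" and anq: "\<not> q dvd a" and anb: "\<not>(\<exists>i. i + r \<le> qlen q a \<and> q^r dvd a div q^i)"
    using a Bset_iff_dvd by auto
  have ql: "qlen q n = j + qlen q a" using qlen_concat[OF apos, of 0 j] n q_pos by simp
  show False
  proof (cases "p \<ge> j")
    case True
    have "q^p = q^j * q^(p-j)" using True by (simp add: power_add[symmetric])
    hence "n div q^p = a div q^(p - j)" using n q_pos by (simp add: div_mult2_eq)
    hence "q^r dvd a div q^(p - j)" using blk by simp
    moreover have "p - j + r \<le> qlen q a" using pk ql True by linarith
    ultimately show False using anb by blast
  next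
    case False
    have "(n div q^p) div q^(j - p) mod q = 0"
      using digit_zero_of_power_dvd[OF q_pos blk] False j by simp
    moreover have "q^j = q^p * q^(j - p)" using False by (simp add: power_add[symmetric])
    hence "(n div q^p) div q^(j - p) = a" using n q_pos by (simp add: div_mult2_eq[symmetric])
    ultimately have "a mod q = 0" by simp
    with anq show False by (simp add: dvd_eq_mod_eq_0)
  qed
qed

definition zero_blocks :: "nat \<Rightarrow> nat \<Rightarrow> nat set" where
  "zero_blocks k n = {p. p + r \<le> k \<and> q^r dvd n div q^p}"

lemma finite_zero_blocks: "finite (zero_blocks k n)"
  unfolding zero_blocks_def by (rule finite_subset[of _ "{..k}"]) auto

lemma zero_block_of_quotient:
  assumes "q^r dvd (n div q^s) div q^j" "j + r \<le> qlen q (n div q^s)" "qlen q n = s + qlen q (n div q^s)"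
  shows "s + j \<in> zero_blocks (qlen q n) n"
  using assms unfolding zero_blocks_def by (simp add: power_add div_mult2_eq)

lemma zero_block_step:
  assumes "q^r dvd n div q^m" "q dvd n div q^(m+r)"
  shows "q^r dvd n div q^(m+1)"
proof -
  obtain z where z: "n div q^(m+r) = q * z" using assms(2) by blast
  have "n div q^m = q^r * (n div q^(m+r))"
    using assms(1) by (simp add: power_add div_mult2_eq)
  have "n div q^(m+1) = (n div q^m) div q" by (simp add: div_mult2_eq[symmetric] mult.commute)
  also have "\<dots> = q^r * z" using \<open>n div q^m = q^r * (n div q^(m+r))\<close> z q_pos
    by (simp add: mult.left_commute)
  finally show ?thesis by simp
qed

lemma concat_last_zero_block:
  assumes m: "m + r \<le> k" and a: "a \<in> Blen (k - m - r)" and b: "b < q^m"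
  shows "qlen q (q^(m+r) * a + b) = k" "m \<in> zero_blocks k (q^(m+r) * a + b)"
    "Max (zero_blocks k (q^(m+r) * a + b)) = m"
proof -
  let ?n = "q^(m+r) * a + b"
  have aB: "a \<in> Bset q r" and al: "qlen q a = k - m - r" using a unfolding Blen_def by auto
  have apos: "a > 0" using aB Bset_iff_dvd by auto
  have bmr: "b < q^(m+r)" using b by (rule less_power_mono) simp
  show ql: "qlen q ?n = k" using qlen_concat[OF apos bmr] al m apos qlen_lower(1)[OF apos] by simp
  have "q^(m+r) = q^m * q^r" by (simp add: power_add)
  hence "?n div q^m = q^r * a" using b q_pos by (simp add: mult.assoc)
  thus mb: "m \<in> zero_blocks k ?n" unfolding zero_blocks_def using m by simp
  have "\<forall>p\<in>zero_blocks k ?n. p \<le> m"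
    using zero_block_in_concat[OF aB b refl] ql unfolding zero_blocks_def by auto
  thus "Max (zero_blocks k ?n) = m" using mb finite_zero_blocks by (intro Max_eqI) auto
qed

lemma split_at_last_zero_block:
  assumes k: "k \<ge> 1" and n1: "q^(k-1) \<le> n" and n2: "n < q^k" and ne: "zero_blocks k n \<noteq> {}"
  defines "m \<equiv> Max (zero_blocks k n)"
  shows "m + r \<le> k" "n div q^(m+r) \<in> Blen (k - m - r)" "n mod q^m < q^m"
    "n = q^(m+r) * (n div q^(m+r)) + n mod q^m"
proof -
  have mB: "m \<in> zero_blocks k n" unfolding m_def using finite_zero_blocks ne by (rule Max_in)
  have mmax: "\<And>p. p \<in> zero_blocks k n \<Longrightarrow> p \<le> m" unfolding m_def using finite_zero_blocks by simp
  show mr: "m + r \<le> k" using mB unfolding zero_blocks_def by simp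
  have dv: "q^r dvd n div q^m" using mB unfolding zero_blocks_def by simp
  show "n mod q^m < q^m" using q_pos by simp
  define a where "a = n div q^(m+r)"
  have qmr: "q^(m+r) = q^m * q^r" by (simp add: power_add)
  have nmod: "n mod q^(m+r) = n mod q^m"
    using dv qmr by (simp add: mod_mult2_eq dvd_eq_mod_eq_0)
  show nrep: "n = q^(m+r) * (n div q^(m+r)) + n mod q^m"
    using nmod by (metis div_mult_mod_eq mult.commute)
  have adiv: "n div q^m = q^r * a" using dv qmr unfolding a_def by (simp add: div_mult2_eq)
  have apos: "a > 0"
  proof (rule ccontr)
    assume "\<not> a > 0" hence "a = 0" by simp
    hence "n < q^m" using nrep q_pos a_def by (metis add_0 mod_less_divisor mult_0_right power_eq_0_iff not_gr0)
    moreover have "q^m \<le> q^(k-1)" using mr r1 q2 by (intro power_increasing) auto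
    ultimately show False using n1 by simp
  qed
  have ql: "qlen q n = m + r + qlen q a"
    using qlen_concat[OF apos, of "n mod q^m" "m+r"] nrep q_pos a_def
    by (metis less_power_mono le_add1 mod_less_divisor zero_less_power)
  have qn: "qlen q n = k" using k n1 n2 by (intro qlen_eqI)
  have al: "qlen q a = k - m - r" using ql qn by simp
  have anq: "\<not> q dvd a"
  proof
    assume qa: "q dvd a"
    hence "a \<ge> q" using apos by (simp add: dvd_imp_le)
    hence "qlen q a \<noteq> 1" using less_q_power_qlen[of a] by (metis not_less power_one_right)
    hence "m + 1 + r \<le> k" using qlen_lower(1)[OF apos] al mr by simp
    moreover have "q^r dvd n div q^(m+1)" using zero_block_step[OF dv] qa unfolding a_def .
    ultimately have "m + 1 \<in> zero_blocks k n" unfolding zero_blocks_def by simp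
    with mmax show False by fastforce
  qed
  have anb: "\<not>(\<exists>j. j + r \<le> qlen q a \<and> q^r dvd a div q^j)"
  proof
    assume "\<exists>j. j + r \<le> qlen q a \<and> q^r dvd a div q^j"
    then obtain j where "j + r \<le> qlen q a" "q^r dvd a div q^j" by blast
    hence "m + r + j \<in> zero_blocks k n" using zero_block_of_quotient[of n "m+r" j] ql qn unfolding a_def by simp
    with mmax r1 show False by fastforce
  qed
  show "n div q^(m+r) \<in> Blen (k - m - r)"
    using apos anq anb al unfolding Blen_def a_def[symmetric] Bset_iff_dvd by simp
qed

lemma split_off_trailing_zeros:
  assumes k: "k \<ge> 1" and n1: "q^(k-1) \<le> n" and n2: "n < q^k" and ne: "zero_blocks k n = {}"
  defines "j \<equiv> multiplicity q n"
  shows "j < r" "n div q^j \<in> Blen (k - j)" "n = q^j * (n div q^j)"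
proof -
  have npos: "n > 0" using n1 q_pos by (metis gr0I le_zero_eq power_not_zero)
  have nu: "\<not> is_unit q" using q2 by simp
  have dv: "q^j dvd n" unfolding j_def by (rule multiplicity_dvd)
  show nrep: "n = q^j * (n div q^j)" using dv by simp
  define a where "a = n div q^j"
  have anq: "\<not> q dvd a" unfolding a_def j_def using multiplicity_decompose[of n q] npos nu by simp
  have apos: "a > 0" using npos nrep a_def by (metis gr0I mult_0_right)
  have qn: "qlen q n = k" using k n1 n2 by (intro qlen_eqI)
  have ql: "qlen q n = j + qlen q a" using qlen_concat[OF apos, of 0 j] nrep a_def q_pos by simp
  show jr: "j < r"
  proof (rule ccontr)
    assume "\<not> j < r"
    hence "q^r dvd n" using dv by (meson dvd_trans le_imp_power_dvd not_less)
    moreover have "r \<le> k"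
    proof -
      have "q^r \<le> n" using \<open>q^r dvd n\<close> npos by (simp add: dvd_imp_le)
      hence "q^r < q^k" using n2 by simp
      thus ?thesis using q2 by (simp add: power_strict_increasing_iff)
    qed
    ultimately have "0 \<in> zero_blocks k n" unfolding zero_blocks_def by simp
    with ne show False by simp
  qed
  have anb: "\<not>(\<exists>i. i + r \<le> qlen q a \<and> q^r dvd a div q^i)"
  proof
    assume "\<exists>i. i + r \<le> qlen q a \<and> q^r dvd a div q^i"
    then obtain i where "i + r \<le> qlen q a" "q^r dvd a div q^i" by blast
    hence "j + i \<in> zero_blocks k n" using zero_block_of_quotient[of n j i] ql qn unfolding a_def by simp
    with ne show False by simp
  qed
  show "n div q^j \<in> Blen (k - j)"
    using apos anq anb ql qn unfolding Blen_def a_def[symmetric] Bset_iff_dvd by simp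
qed

lemma shifted_no_zero_blocks:
  assumes j: "j < r" and a: "a \<in> Blen (k - j)" and k: "k \<ge> 1"
  shows "qlen q (q^j * a) = k" "zero_blocks k (q^j * a) = {}"
proof -
  have aB: "a \<in> Bset q r" and al: "qlen q a = k - j" using a unfolding Blen_def by auto
  have apos: "a > 0" using aB Bset_iff_dvd by auto
  have "qlen q a \<ge> 1" using qlen_lower(1)[OF apos] .
  show ql: "qlen q (q^j * a) = k" using qlen_concat[OF apos, of 0 j] q_pos al \<open>qlen q a \<ge> 1\<close> by simp
  show "zero_blocks k (q^j * a) = {}"
    using no_zero_block_shifted[OF aB j refl] ql unfolding zero_blocks_def by auto
qed

lemma bij_betw_concat_zero_block:
  assumes k: "k \<ge> 1"
  shows "bij_betw (\<lambda>(m, a, b). q^(m+r) * a + b)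
           (SIGMA m:{m. m + r \<le> k}. Blen (k-m-r) \<times> {..<q^m})
           {n \<in> {q^(k-1)..<q^k}. zero_blocks k n \<noteq> {}}"
  (is "bij_betw ?h ?S ?A")
proof (rule bij_betwI')
  fix x y assume x: "x \<in> ?S" and y: "y \<in> ?S"
  obtain m a b where xe: "x = (m, a, b)" and hx: "m + r \<le> k" "a \<in> Blen (k-m-r)" "b < q^m"
    using x by auto
  obtain m' a' b' where ye: "y = (m', a', b')" and hy: "m' + r \<le> k" "a' \<in> Blen (k-m'-r)" "b' < q^m'"
    using y by auto
  show "?h x = ?h y \<longleftrightarrow> x = y"
  proof
    assume "?h x = ?h y"
    hence en: "q^(m+r)*a+b = q^(m'+r)*a'+b'" using xe ye by simp
    have m: "m = m'"
      using concat_last_zero_block(3)[OF hx] concat_last_zero_block(3)[OF hy] en by simp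
    moreover have "a = a'" using concat_div[OF hx(3), of a] concat_div[OF hy(3), of a'] en m by simp
    moreover have "(q^(m+r)*a+b) mod q^m = b" "(q^(m'+r)*a'+b') mod q^m' = b'"
      using hx(3) hy(3) by (simp_all add: power_add mod_mult_self3 mult.assoc)
    ultimately show "x = y" using en xe ye by simp
  qed simp
next
  fix x assume "x \<in> ?S"
  then obtain m a b where x: "x = (m, a, b)" and h: "m + r \<le> k" "a \<in> Blen (k-m-r)" "b < q^m"
    by auto
  show "?h x \<in> ?A" using concat_last_zero_block(1,2)[OF h] qlen_iff[OF k] x by auto
next
  fix n assume "n \<in> ?A"
  hence n: "q^(k-1) \<le> n" "n < q^k" "zero_blocks k n \<noteq> {}" by auto
  note split = split_at_last_zero_block[OF k n]
  let ?m = "Max (zero_blocks k n)"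
  show "\<exists>x\<in>?S. n = ?h x"
    using split by (intro bexI[of _ "(?m, n div q^(?m+r), n mod q^?m)"]) auto
qed

lemma bij_betw_shift_blockfree:
  assumes k: "k \<ge> 1"
  shows "bij_betw (\<lambda>(j, a). q^j * a) (SIGMA j:{..<r}. Blen (k-j))
           {n \<in> {q^(k-1)..<q^k}. zero_blocks k n = {}}"
  (is "bij_betw ?h ?S ?A")
proof (rule bij_betwI')
  fix x y assume x: "x \<in> ?S" and y: "y \<in> ?S"
  obtain j a where xe: "x = (j, a)" and a: "a \<in> Blen (k-j)" using x by auto
  obtain j' a' where ye: "y = (j', a')" and a': "a' \<in> Blen (k-j')" using y by auto
  have anq: "\<not> q dvd a" "\<not> q dvd a'" using a a' Bset_iff_dvd unfolding Blen_def by auto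
  show "?h x = ?h y \<longleftrightarrow> x = y"
  proof
    assume "?h x = ?h y"
    hence en: "q^j * a = q^j' * a'" using xe ye by simp
    have "j = j'"
    proof (rule ccontr)
      assume "j \<noteq> j'"
      then consider "j < j'" | "j' < j" by linarith
      then show False
      proof cases
        case 1
        hence "q^j' = q^j * q^(j'-j)" by (simp add: power_add[symmetric])
        hence "a = q^(j'-j) * a'" using en q_pos by simp
        thus False using anq 1 by simp
      next
        case 2
        hence "q^j = q^j' * q^(j-j')" by (simp add: power_add[symmetric])
        hence "a' = q^(j-j') * a" using en q_pos by simp
        thus False using anq 2 by simp
      qed
    qed
    thus "x = y" using en q_pos xe ye by simp
  qed simp
next
  fix x assume "x \<in> ?S"
  then obtain j a where x: "x = (j, a)" and h: "j < r" "a \<in> Blen (k-j)" by auto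
  show "?h x \<in> ?A" using shifted_no_zero_blocks[OF h k] qlen_iff[OF k] x by auto
next
  fix n assume "n \<in> ?A"
  hence n: "q^(k-1) \<le> n" "n < q^k" "zero_blocks k n = {}" by auto
  note split = split_off_trailing_zeros[OF k n]
  let ?j = "multiplicity q n"
  show "\<exists>x\<in>?S. n = ?h x" using split by (intro bexI[of _ "(?j, n div q^?j)"]) auto
qed

lemma sum_length_decompose:
  fixes g :: "nat \<Rightarrow> 'a::comm_monoid_add"
  assumes k: "k \<ge> 1"
  shows "(\<Sum>n\<in>{q^(k-1)..<q^k}. g n) =
    (\<Sum>m\<in>{m. m + r \<le> k}. \<Sum>a\<in>Blen(k-m-r). \<Sum>b<q^m. g (q^(m+r)*a+b)) +
    (\<Sum>j<r. \<Sum>a\<in>Blen(k-j). g (q^j*a))"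
proof -
  let ?A = "{q^(k-1)..<q^k}"
  have finM: "finite {m. m + r \<le> k}" by (rule finite_subset[of _ "{..k}"]) auto
  have "(\<Sum>n\<in>?A. g n) = (\<Sum>n\<in>{n \<in> ?A. zero_blocks k n \<noteq> {}}. g n) + (\<Sum>n\<in>{n \<in> ?A. zero_blocks k n = {}}. g n)"
    by (subst sum.union_disjoint[symmetric]) (auto intro: sum.cong)
  also have "(\<Sum>n\<in>{n \<in> ?A. zero_blocks k n \<noteq> {}}. g n)
      = (\<Sum>(m, a, b)\<in>(SIGMA m:{m. m + r \<le> k}. Blen (k-m-r) \<times> {..<q^m}). g (q^(m+r)*a+b))"
    using sum.reindex_bij_betw[OF bij_betw_concat_zero_block[OF k], of g] by (simp add: case_prod_beta)
  also have "\<dots> = (\<Sum>m\<in>{m. m + r \<le> k}. \<Sum>p\<in>Blen(k-m-r) \<times> {..<q^m}. g (q^(m+r)*fst p+snd p))"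
    by (subst sum.Sigma[OF finM]) (auto simp: case_prod_beta)
  also have "\<dots> = (\<Sum>m\<in>{m. m + r \<le> k}. \<Sum>a\<in>Blen(k-m-r). \<Sum>b<q^m. g (q^(m+r)*a+b))"
    by (intro sum.cong refl) (simp add: sum.cartesian_product case_prod_beta)
  also have "(\<Sum>n\<in>{n \<in> ?A. zero_blocks k n = {}}. g n) = (\<Sum>(j, a)\<in>(SIGMA j:{..<r}. Blen (k-j)). g (q^j*a))"
    using sum.reindex_bij_betw[OF bij_betw_shift_blockfree[OF k], of g] by (simp add: case_prod_beta)
  also have "\<dots> = (\<Sum>j<r. \<Sum>a\<in>Blen(k-j). g (q^j*a))"
    by (subst sum.Sigma) (auto simp: case_prod_beta)
  finally show ?thesis .
qed

definition aligned_blockfree :: "nat \<Rightarrow> nat \<Rightarrow> bool" where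
  "aligned_blockfree k n = (\<forall>i < k div r. \<not> q^r dvd (n div q^(r*i)))"

lemma aligned_blockfree_peel:
  assumes k: "r \<le> k" and n: "n < q^k" and P: "aligned_blockfree k n"
  shows "n mod q^r \<in> {1..<q^r}" "n div q^r < q^(k-r)" "aligned_blockfree (k-r) (n div q^r)"
proof -
  have "((k-r)+r) div r = (k-r) div r + 1" using r1 by simp
  hence dk: "(k - r) div r = k div r - 1" "k div r \<ge> 1" using k by simp_all
  have "\<not> q^r dvd n" using P dk(2) unfolding aligned_blockfree_def by (metis div_by_1 mult_0_right power_0 zero_less_one less_le_trans)
  thus "n mod q^r \<in> {1..<q^r}" using q_pos by (simp add: dvd_eq_mod_eq_0 Suc_le_eq)
  have "q^k = q^r * q^(k-r)" using k by (simp add: power_add[symmetric])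
  thus "n div q^r < q^(k-r)" using n q_pos by (simp add: less_mult_imp_div_less mult.commute)
  show "aligned_blockfree (k-r) (n div q^r)" unfolding aligned_blockfree_def
  proof (intro allI impI)
    fix i assume i: "i < (k - r) div r"
    have "n div q^r div q^(r*i) = n div q^(r * Suc i)" by (simp add: div_mult2_eq power_add)
    moreover have "Suc i < k div r" using i dk by simp
    ultimately show "\<not> q^r dvd n div q^r div q^(r*i)" using P[unfolded aligned_blockfree_def, rule_format, of "Suc i"] by simp
  qed
qed

lemma card_aligned_blockfree: "card {n. n < q^k \<and> aligned_blockfree k n} \<le> (q^r - 1)^(k div r) * q^(k mod r)"
proof (induction k rule: less_induct)
  case (less k)
  show ?case
  proof (cases "k < r")
    case True
    have "card {n. n < q^k \<and> aligned_blockfree k n} \<le> card {..<q^k}" by (intro card_mono) auto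
    thus ?thesis using True by simp
  next
    case False
    let ?S = "{n. n < q^k \<and> aligned_blockfree k n}"
    let ?T = "{n. n < q^(k-r) \<and> aligned_blockfree (k-r) n}"
    have "((k-r)+r) div r = Suc ((k-r) div r)" "((k-r)+r) mod r = (k-r) mod r" using r1 by simp_all
    hence dk: "k div r = Suc ((k - r) div r)" "(k - r) mod r = k mod r" using False by simp_all
    have inj: "inj_on (\<lambda>n. (n mod q^r, n div q^r)) ?S"
      by (rule inj_onI) (metis div_mult_mod_eq prod.inject)
    have "(\<lambda>n. (n mod q^r, n div q^r)) ` ?S \<subseteq> {1..<q^r} \<times> ?T"
      using aligned_blockfree_peel[of k] False by (auto simp del: atLeastLessThan_iff)
    hence "card ?S \<le> card ({1..<q^r} \<times> ?T)" by (rule card_inj_on_le[OF inj]) simp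
    also have "\<dots> = (q^r - 1) * card ?T" by (simp add: card_cartesian_product)
    also have "\<dots> \<le> (q^r - 1) * ((q^r - 1)^((k-r) div r) * q^((k-r) mod r))"
      using less.IH[of "k - r"] False r1 by simp
    also have "\<dots> = (q^r - 1)^(k div r) * q^(k mod r)"
      using dk by (simp only: power_Suc mult.assoc)
    finally show ?thesis .
  qed
qed

lemma Blen_subset_aligned: "Blen l \<subseteq> {n. n < q^l \<and> aligned_blockfree l n}"
proof
  fix a assume a: "a \<in> Blen l"
  have aB: "a \<in> Bset q r" and al: "qlen q a = l" using a unfolding Blen_def by auto
  have anb: "\<not>(\<exists>j. j + r \<le> qlen q a \<and> q^r dvd a div q^j)" using aB Bset_iff_dvd by auto
  have "aligned_blockfree l a" unfolding aligned_blockfree_def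
  proof (intro allI impI)
    fix i assume i: "i < l div r"
    have "r * i + r = r * Suc i" by simp
    also have "\<dots> \<le> r * (l div r)" using i by (intro mult_le_mono2) simp
    also have "\<dots> \<le> l" by simp
    finally show "\<not> q^r dvd a div q^(r*i)" using anb al by blast
  qed
  thus "a \<in> {n. n < q^l \<and> aligned_blockfree l n}" using Blen_subset a by auto
qed

lemma card_Blen_nat: "card (Blen l) \<le> (q^r - 1)^(l div r) * q^(l mod r)"
proof -
  have "card (Blen l) \<le> card {n. n < q^l \<and> aligned_blockfree l n}" by (rule card_mono[OF _ Blen_subset_aligned]) auto
  thus ?thesis using card_aligned_blockfree[of l] by linarith
qed

(* Keeping only the aligned blocks gives card (Blen l) \<le> (q^r - 1)^(l div r) q^(l mod r)
   \<le> lam^l / sig; the point is that lam < q. *)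
definition sig :: real where "sig = 1 - 1 / real q ^ r"
definition lam :: real where "lam = real q * sig powr (1 / real r)"

lemma sig_bounds: "1/2 \<le> sig" "sig < 1"
proof -
  have "(2::real) \<le> real q ^ 1" using q2 by simp
  also have "\<dots> \<le> real q ^ r" using r1 q2 by (intro power_increasing) auto
  finally have "real q ^ r \<ge> 2" .
  moreover have "real q ^ r > 0" using q_pos by simp
  ultimately show "1/2 \<le> sig" unfolding sig_def by (simp add: field_simps)
  show "sig < 1" unfolding sig_def using q_pos by simp
qed

lemma lam_bounds: "1 \<le> lam" "lam < real q"
proof -
  have s0: "0 < sig" using sig_bounds by simp
  have "sig powr (1 / real r) < 1 powr (1 / real r)" using sig_bounds s0 r1 by (intro powr_less_mono2) auto
  hence "sig powr (1 / real r) < 1" by simp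
  thus "lam < real q" unfolding lam_def using q_pos by simp
  have "sig powr 1 \<le> sig powr (1 / real r)"
    using s0 sig_bounds r1 by (intro powr_mono') auto
  hence "sig \<le> sig powr (1 / real r)" using s0 by simp
  hence "real q * sig \<le> lam" unfolding lam_def using q_pos by simp
  moreover have "2 * (1/2) \<le> real q * sig" using sig_bounds q2 by (intro mult_mono) auto
  ultimately show "1 \<le> lam" by simp
qed

lemma card_Blen: "real (card (Blen l)) \<le> lam ^ l / sig"
proof -
  have s0: "0 < sig" "sig < 1" using sig_bounds by auto
  have "real (card (Blen l)) \<le> real ((q^r - 1)^(l div r) * q^(l mod r))"
    using card_Blen_nat of_nat_le_iff by blast
  also have "real ((q^r - 1)^(l div r) * q^(l mod r)) = (real q ^ r * sig)^(l div r) * real q^(l mod r)"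
  proof -
    have "q^r \<ge> 1" using q_pos by simp
    hence "real (q^r - 1) = real q ^ r * sig" unfolding sig_def using q_pos by (simp add: of_nat_diff field_simps)
    thus ?thesis by simp
  qed
  also have "\<dots> = real q ^ l * sig^(l div r)"
  proof -
    have "real q ^ l = real q ^ (r * (l div r)) * real q ^ (l mod r)"
      by (simp add: power_add[symmetric])
    thus ?thesis by (simp add: power_mult_distrib power_mult)
  qed
  also have "sig^(l div r) \<le> sig powr (real l / real r - 1)"
  proof -
    have "sig^(l div r) = sig powr real (l div r)" using s0 by (simp add: powr_realpow)
    also have "\<dots> \<le> sig powr (real l / real r - 1)"
    proof (rule powr_mono')
      have "real l / real r - 1 \<le> real (l div r)"
      proof -
        have "real l = real r * real (l div r) + real (l mod r)"
          by (metis of_nat_add of_nat_mult div_mult_mod_eq mult.commute)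
        moreover have "real (l mod r) < real r" using r1 by simp
        ultimately show ?thesis using r1 by (simp add: field_simps)
      qed
      thus "real l / real r - 1 \<le> real (l div r)" .
    qed (use s0 in auto)
    finally show ?thesis .
  qed
  hence "real q ^ l * sig^(l div r) \<le> real q ^ l * sig powr (real l / real r - 1)"
    by (intro mult_left_mono) auto
  also have "sig powr (real l / real r - 1) = (sig powr (1 / real r))^l / sig"
    using s0 by (simp add: powr_diff powr_realpow[symmetric] powr_powr field_simps)
  also have "real q ^ l * ((sig powr (1 / real r))^l / sig) = lam ^ l / sig"
    unfolding lam_def by (simp add: power_mult_distrib)
  finally show ?thesis .
qed

end

section \<open>The functional equation for F\<close>

locale quasimult_fun = qary_blocks + fixes f :: "nat \<Rightarrow> real"
  assumes fpos: "\<And>n. f n > 0" and qm: "quasimult q r f"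
begin

lemma f_concat: "b < q^k \<Longrightarrow> f (q^(k+r)*a+b) = f a * f b"
  using qm unfolding quasimult_def by blast

lemma f_0: "f 0 = 1"
proof -
  have "f 0 = f 0 * f 0" using f_concat[of 0 0 0] by simp
  thus ?thesis using fpos[of 0] by simp
qed

lemma fpow_mult: "b < q^m \<Longrightarrow> fpow f (q^(m+r)*a+b) t = fpow f a t * fpow f b t"
  unfolding fpow_def using fpos[of a] fpos[of b] by (simp add: f_concat ln_mult distrib_left exp_add)

lemma fpow_0 [simp]: "fpow f 0 t = 1" unfolding fpow_def by (simp add: f_0)

lemma fpow_t0 [simp]: "fpow f n 0 = 1" unfolding fpow_def by simp

(* [x^k] G(x,t): the numbers of length k without a block of r zeros are exactly the q^j a
   with j < r and a \<in> B of length k - j. *)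
definition Gcoef :: "complex \<Rightarrow> nat \<Rightarrow> complex" where
  "Gcoef t k = (\<Sum>j<r. \<Sum>a\<in>Blen(k-j). fpow f (q^j*a) t)"

lemma Bcoef_eq_sum_Blen: "Bcoef q r f t l = (\<Sum>a\<in>Blen l. fpow f a t)"
  unfolding Bcoef_def Blen_def by simp

lemma Fcoef_recurrence: assumes k: "k \<ge> 1"
  shows "Fcoef q f t k = Fcoef q f t (k-1) +
     (\<Sum>m\<in>{m. m + r \<le> k}. Bcoef q r f t (k-m-r) * Fcoef q f t m) + Gcoef t k"
proof -
  have sub: "q^(k-1) \<le> q^k" using q2 by (intro power_increasing) auto
  have eq: "{..<q^k} = {..<q^(k-1)} \<union> {q^(k-1)..<q^k}" using sub by auto
  have "Fcoef q f t k = (\<Sum>n\<in>{..<q^(k-1)} \<union> {q^(k-1)..<q^k}. fpow f n t)"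
    unfolding Fcoef_def using eq by simp
  also have "\<dots> = Fcoef q f t (k-1) + (\<Sum>n\<in>{q^(k-1)..<q^k}. fpow f n t)"
    unfolding Fcoef_def by (rule sum.union_disjoint) auto
  also have "(\<Sum>n\<in>{q^(k-1)..<q^k}. fpow f n t) =
     (\<Sum>m\<in>{m. m + r \<le> k}. Bcoef q r f t (k-m-r) * Fcoef q f t m) + Gcoef t k"
  proof -
    have "\<And>m. (\<Sum>a\<in>Blen(k-m-r). \<Sum>b<q^m. fpow f (q^(m+r)*a+b) t)
            = (\<Sum>a\<in>Blen(k-m-r). fpow f a t) * (\<Sum>b<q^m. fpow f b t)"
    proof -
      fix m
      have "(\<Sum>a\<in>Blen(k-m-r). \<Sum>b<q^m. fpow f (q^(m+r)*a+b) t)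
          = (\<Sum>a\<in>Blen(k-m-r). \<Sum>b<q^m. fpow f a t * fpow f b t)"
        by (intro sum.cong refl) (simp add: fpow_mult)
      also have "\<dots> = (\<Sum>a\<in>Blen(k-m-r). fpow f a t) * (\<Sum>b<q^m. fpow f b t)"
        by (rule sum_product[symmetric])
      finally show "?thesis m" .
    qed
    thus ?thesis unfolding sum_length_decompose[OF k] Gcoef_def Bcoef_eq_sum_Blen Fcoef_def by simp
  qed
  finally show ?thesis by simp
qed

lemma Gcoef_zero [simp]: "Gcoef t 0 = 0" unfolding Gcoef_def by simp

lemma Fcoef_0 [simp]: "Fcoef q f t 0 = 1" unfolding Fcoef_def by simp

lemma Fcoef_fps_equation:
  "Abs_fps (Fcoef q f t) = 1 + fps_X * Abs_fps (Fcoef q f t)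
     + fps_X^r * (Abs_fps (Bcoef q r f t) * Abs_fps (Fcoef q f t)) + Abs_fps (Gcoef t)"
proof (rule fps_ext)
  fix n
  show "Abs_fps (Fcoef q f t) $ n = (1 + fps_X * Abs_fps (Fcoef q f t)
     + fps_X^r * (Abs_fps (Bcoef q r f t) * Abs_fps (Fcoef q f t)) + Abs_fps (Gcoef t)) $ n"
  proof (cases "n = 0")
    case True thus ?thesis using r1 by (simp add: fps_X_power_mult_nth)
  next
    case False
    have conv: "(\<Sum>m\<in>{m. m + r \<le> n}. Bcoef q r f t (n-m-r) * Fcoef q f t m) =
      (if n < r then 0 else (\<Sum>i=0..n-r. Bcoef q r f t i * Fcoef q f t (n - r - i)))"
    proof (cases "n < r")
      case True hence "{m. m + r \<le> n} = {}" by auto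
      thus ?thesis using True by simp
    next
      case False
      hence "{m. m + r \<le> n} = {0..n-r}" by auto
      hence "(\<Sum>m\<in>{m. m + r \<le> n}. Bcoef q r f t (n-m-r) * Fcoef q f t m)
          = (\<Sum>m=0..n-r. Bcoef q r f t (n-m-r) * Fcoef q f t m)" by simp
      also have "\<dots> = (\<Sum>i=0..n-r. Bcoef q r f t (n-(n-r-i)-r) * Fcoef q f t (n-r-i))"
        by (subst sum.atLeastAtMost_rev) simp
      also have "\<dots> = (\<Sum>i=0..n-r. Bcoef q r f t i * Fcoef q f t (n-r-i))"
        using False by (intro sum.cong refl) auto
      finally show ?thesis using False by simp
    qed
    have e1: "(fps_X^r * (Abs_fps (Bcoef q r f t) * Abs_fps (Fcoef q f t))) $ n =
      (if n < r then 0 else (\<Sum>i=0..n-r. Bcoef q r f t i * Fcoef q f t (n - r - i)))"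
      unfolding fps_X_power_mult_nth by (simp add: fps_mult_nth)
    have e2: "(fps_X * Abs_fps (Fcoef q f t)) $ n = Fcoef q f t (n-1)" using False by simp
    show ?thesis using False Fcoef_recurrence[of n t] conv e1 e2 by (simp only: fps_add_nth) simp
  qed
qed

end

section \<open>Uniform coefficient bounds\<close>

locale quasimult_log_bounded = quasimult_fun +
  fixes a0 b0 :: real
  assumes a0: "a0 \<ge> 0" and b0: "b0 \<ge> 0"
    and logb: "\<And>k n. n < q^k \<Longrightarrow> \<bar>ln (f n)\<bar> \<le> a0 + b0 * real k"
begin

(* For n < q^k and |t| \<le> tmax, |f(n)^t| \<le> exp (2 tmax (a0 + b0 k)); tmax is small enough that the
   resulting growth rate gam = lam exp (2 tmax b0) stays below sqrt (q lam) < q. *)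
definition tmax :: real where "tmax = ln (real q / lam) / (4 * (b0 + 1))"
definition gam :: real where "gam = lam * exp (2 * tmax * b0)"
definition Acoef :: real where "Acoef = real r * exp (2 * tmax * a0) / sig"

lemma tmax_pos: "tmax > 0"
proof -
  have "real q / lam > 1" using lam_bounds by simp
  thus ?thesis unfolding tmax_def using b0 by simp
qed

lemma norm_0_le_tmax: "norm (0::complex) \<le> tmax" using tmax_pos by simp

lemma gam_bounds: "gam \<ge> 1" "gam < real q"
proof -
  have "exp (2 * tmax * b0) \<ge> 1" using tmax_pos b0 by simp
  hence "1 * 1 \<le> lam * exp (2 * tmax * b0)" using lam_bounds by (intro mult_mono) auto
  thus "gam \<ge> 1" unfolding gam_def by simp
  have l0: "lam > 0" using lam_bounds by simp
  have "2 * tmax * b0 \<le> ln (real q / lam) / 2"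
  proof -
    have "ln (real q / lam) \<ge> 0" using lam_bounds l0 by simp
    moreover have "2 * tmax * b0 = ln (real q / lam) * (b0 / (2*(b0+1)))" unfolding tmax_def using b0 by (simp add: field_simps)
    moreover have "b0 / (2*(b0+1)) \<le> 1/2" using b0 by (simp add: field_simps)
    ultimately have "2 * tmax * b0 \<le> ln (real q / lam) * (1/2)" by (metis mult_left_mono)
    thus ?thesis by simp
  qed
  hence "exp (2 * tmax * b0) \<le> exp (ln (real q / lam) / 2)" by simp
  also have "\<dots> = (real q / lam) powr (1/2)" using lam_bounds l0 q_pos by (simp add: powr_def)
  also have "\<dots> = sqrt (real q / lam)" using l0 by (simp add: powr_half_sqrt)
  finally have "gam \<le> lam * sqrt (real q / lam)" unfolding gam_def using l0 by simp
  also have "lam * sqrt (real q / lam) = sqrt (real q * lam)"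
  proof (rule real_sqrt_unique[symmetric])
    show "(lam * sqrt (real q / lam))^2 = real q * lam" using l0 q_pos
      by (simp add: power_mult_distrib power2_eq_square[of lam] field_simps)
    show "0 \<le> lam * sqrt (real q / lam)" using l0 by simp
  qed
  also have "\<dots> < sqrt (real q * real q)" using lam_bounds q_pos by (intro real_sqrt_less_mono) simp
  also have "\<dots> = real q" by simp
  finally show "gam < real q" .
qed

definition Ebound :: "nat \<Rightarrow> real" where "Ebound k = exp (2 * tmax * (a0 + b0 * real k))"

lemma Ebound_pos: "Ebound k > 0" unfolding Ebound_def by simp

lemma Ebound_eq: "Ebound k = exp (2*tmax*a0) * exp (2*tmax*b0) ^ k"
  unfolding Ebound_def by (simp add: distrib_left exp_add exp_of_nat_mult[symmetric] mult.commute mult.left_commute)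

lemma norm_fpow_le: assumes n: "n < q^k" and t: "norm t \<le> tmax"
  shows "norm (fpow f n t) \<le> Ebound k"
proof -
  have L: "\<bar>ln (f n)\<bar> \<le> a0 + b0 * real k" using logb[OF n] .
  have "Re (t * of_real (ln (f n))) = Re t * ln (f n)" by simp
  also have "\<dots> \<le> \<bar>Re t\<bar> * \<bar>ln (f n)\<bar>" by (metis abs_ge_self abs_mult)
  also have "\<dots> \<le> tmax * (a0 + b0 * real k)"
    using t L abs_Re_le_cmod[of t] by (intro mult_mono) auto
  also have "\<dots> \<le> 2 * tmax * (a0 + b0 * real k)" using tmax_pos a0 b0 by simp
  finally show ?thesis unfolding fpow_def Ebound_def by simp
qed

lemma norm_fpow_minus_one_le: assumes n: "n < q^k" and t: "norm t \<le> tmax"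
  shows "norm (fpow f n t - 1) \<le> norm t / tmax * Ebound k"
proof -
  define La where "La = a0 + b0 * real k"
  have La0: "La \<ge> 0" unfolding La_def using a0 b0 by simp
  have L: "\<bar>ln (f n)\<bar> \<le> La" using logb[OF n] unfolding La_def .
  have nz: "norm (t * of_real (ln (f n))) \<le> norm t * La"
    using L by (simp add: norm_mult mult_left_mono)
  have "norm (fpow f n t - 1) \<le> norm (t * of_real (ln (f n))) * exp (norm (t * of_real (ln (f n))))"
    unfolding fpow_def by (rule norm_exp_minus_one)
  also have "\<dots> \<le> (norm t * La) * exp (tmax * La)"
  proof (rule mult_mono)
    have "norm t * La \<le> tmax * La" using t La0 by (intro mult_right_mono) auto
    thus "exp (norm (t * of_real (ln (f n)))) \<le> exp (tmax * La)" using nz by simp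
  qed (use nz La0 in auto)
  also have "\<dots> \<le> (norm t / tmax * exp (tmax * La)) * exp (tmax * La)"
  proof (intro mult_right_mono)
    have "tmax * La \<le> exp (tmax * La)" using exp_ge_add_one_self[of "tmax * La"] by linarith
    hence "La \<le> exp (tmax * La) / tmax" using tmax_pos by (simp add: field_simps)
    hence "norm t * La \<le> norm t * (exp (tmax * La) / tmax)" by (intro mult_left_mono) auto
    thus "norm t * La \<le> norm t / tmax * exp (tmax * La)" by simp
  qed auto
  also have "\<dots> = norm t / tmax * Ebound k" unfolding Ebound_def La_def by (simp add: mult_exp_exp)
  finally show ?thesis .
qed

lemma lam_power_Ebound: "lam ^ k / sig * Ebound k = exp (2*tmax*a0) / sig * gam ^ k"
  unfolding Ebound_eq gam_def by (simp add: power_mult_distrib)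

lemma Acoef_ge: "exp (2*tmax*a0) / sig \<le> Acoef"
proof -
  have "exp (2*tmax*a0) / sig \<ge> 0" using sig_bounds by simp
  hence "1 * (exp (2*tmax*a0) / sig) \<le> real r * (exp (2*tmax*a0) / sig)" using r1 by (intro mult_right_mono) auto
  thus ?thesis unfolding Acoef_def by simp
qed

lemma Acoef_pos: "Acoef > 0" unfolding Acoef_def using r1 sig_bounds by simp

lemma norm_Bcoef_le: assumes t: "norm t \<le> tmax" shows "norm (Bcoef q r f t k) \<le> Acoef * gam ^ k"
proof -
  have "norm (Bcoef q r f t k) \<le> real (card (Blen k)) * Ebound k"
    unfolding Bcoef_eq_sum_Blen using Blen_subset norm_fpow_le[OF _ t] by (intro norm_sum_le_card_mult) auto
  also have "\<dots> \<le> lam ^ k / sig * Ebound k" using card_Blen less_imp_le[OF Ebound_pos] by (intro mult_right_mono) auto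
  also have "\<dots> \<le> Acoef * gam ^ k" unfolding lam_power_Ebound using Acoef_ge gam_bounds by (intro mult_right_mono) auto
  finally show ?thesis .
qed

lemma Bcoef_at_0: "Bcoef q r f 0 k = of_nat (card (Blen k))"
  unfolding Bcoef_eq_sum_Blen by simp

lemma norm_Bcoef_diff_le: assumes t: "norm t \<le> tmax"
  shows "norm (Bcoef q r f t k - Bcoef q r f 0 k) \<le> norm t / tmax * Acoef * gam ^ k"
proof -
  have "Bcoef q r f t k - Bcoef q r f 0 k = (\<Sum>a\<in>Blen k. fpow f a t - 1)"
    unfolding Bcoef_eq_sum_Blen by (simp add: sum_subtractf)
  moreover have "norm (\<Sum>a\<in>Blen k. fpow f a t - 1) \<le> real (card (Blen k)) * (norm t / tmax * Ebound k)"
    by (rule norm_sum_le_card_mult) (use Blen_subset norm_fpow_minus_one_le[OF _ t] in auto)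
  ultimately have "norm (Bcoef q r f t k - Bcoef q r f 0 k) \<le> real (card (Blen k)) * (norm t / tmax * Ebound k)"
    by simp
  also have "\<dots> \<le> lam ^ k / sig * (norm t / tmax * Ebound k)"
    using card_Blen less_imp_le[OF Ebound_pos] tmax_pos by (intro mult_right_mono) auto
  also have "\<dots> = norm t / tmax * (lam ^ k / sig * Ebound k)" by (simp add: mult_ac)
  also have "\<dots> \<le> norm t / tmax * (Acoef * gam ^ k)" unfolding lam_power_Ebound
    using Acoef_ge gam_bounds tmax_pos by (intro mult_left_mono mult_right_mono) auto
  finally show ?thesis by simp
qed

lemma shifted_Blen_less: assumes "j < r" "a \<in> Blen (k - j)" "Blen (k - j) \<noteq> {}" shows "q^j * a < q^k"
proof -
  have "k - j \<noteq> 0" using assms(3) by (metis Blen_0)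
  hence jk: "j \<le> k" by simp
  have "a < q^(k-j)" using assms(2) Blen_subset by auto
  hence "q^j * a < q^j * q^(k-j)" using q_pos by simp
  also have "\<dots> = q^k" using jk by (simp add: power_add[symmetric])
  finally show ?thesis .
qed

lemma card_Blen_le: "j \<le> k \<Longrightarrow> real (card (Blen (k - j))) \<le> lam ^ k / sig"
proof -
  assume "j \<le> k"
  have "real (card (Blen (k - j))) \<le> lam ^ (k - j) / sig" by (rule card_Blen)
  also have "\<dots> \<le> lam ^ k / sig" using lam_bounds sig_bounds
    by (intro divide_right_mono power_increasing) auto
  finally show ?thesis .
qed

lemma norm_shifted_Blen_sum_le:
  fixes h :: "nat \<Rightarrow> complex"
  assumes "\<And>n. n < q^k \<Longrightarrow> norm (h n) \<le> B" "B \<ge> 0"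
  shows "norm (\<Sum>j<r. \<Sum>a\<in>Blen(k-j). h (q^j*a)) \<le> real r * (lam ^ k / sig) * B"
proof -
  have "norm (\<Sum>j<r. \<Sum>a\<in>Blen(k-j). h (q^j*a)) \<le> real (card {..<r}) * (lam ^ k / sig * B)"
  proof (rule norm_sum_le_card_mult)
    fix j assume j: "j \<in> {..<r}"
    show "norm (\<Sum>a\<in>Blen(k-j). h (q^j*a)) \<le> lam ^ k / sig * B"
    proof (cases "Blen (k - j) = {}")
      case True thus ?thesis using lam_bounds sig_bounds assms(2) by simp
    next
      case False
      hence jk: "j \<le> k" by (metis Blen_0 diff_is_0_eq nat_le_linear)
      have "norm (\<Sum>a\<in>Blen(k-j). h (q^j*a)) \<le> real (card (Blen (k-j))) * B"
        using shifted_Blen_less[OF _ _ False] j assms(1) by (intro norm_sum_le_card_mult) auto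
      also have "\<dots> \<le> lam ^ k / sig * B" using card_Blen_le[OF jk] assms(2) by (intro mult_right_mono)
      finally show ?thesis .
    qed
  qed auto
  thus ?thesis by simp
qed

lemma norm_Gcoef_le: assumes t: "norm t \<le> tmax" shows "norm (Gcoef t k) \<le> Acoef * gam ^ k"
proof -
  have "norm (Gcoef t k) \<le> real r * (lam ^ k / sig) * Ebound k"
    unfolding Gcoef_def using norm_fpow_le[OF _ t] Ebound_pos by (intro norm_shifted_Blen_sum_le) (auto simp: less_imp_le)
  also have "\<dots> = real r * (lam ^ k / sig * Ebound k)" by simp
  also have "\<dots> = Acoef * gam ^ k" unfolding lam_power_Ebound Acoef_def by simp
  finally show ?thesis .
qed

lemma norm_Gcoef_diff_le: assumes t: "norm t \<le> tmax"
  shows "norm (Gcoef t k - Gcoef 0 k) \<le> norm t / tmax * Acoef * gam ^ k"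
proof -
  have "Gcoef t k - Gcoef 0 k = (\<Sum>j<r. \<Sum>a\<in>Blen(k-j). fpow f (q^j*a) t - 1)"
    unfolding Gcoef_def by (simp add: sum_subtractf)
  moreover have "norm (\<Sum>j<r. \<Sum>a\<in>Blen(k-j). fpow f (q^j*a) t - 1) \<le> real r * (lam ^ k / sig) * (norm t / tmax * Ebound k)"
    using norm_fpow_minus_one_le[OF _ t] Ebound_pos tmax_pos by (intro norm_shifted_Blen_sum_le) (auto simp: less_imp_le)
  ultimately have "norm (Gcoef t k - Gcoef 0 k) \<le> real r * (lam ^ k / sig) * (norm t / tmax * Ebound k)" by simp
  also have "\<dots> = norm t / tmax * (real r * (lam ^ k / sig * Ebound k))" by (simp add: mult_ac)
  also have "\<dots> = norm t / tmax * (real r * (exp (2*tmax*a0) / sig * gam ^ k))"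
    unfolding lam_power_Ebound ..
  also have "\<dots> = norm t / tmax * Acoef * gam ^ k" unfolding Acoef_def by simp
  finally show ?thesis .
qed

lemma Gcoef_at_0: "Gcoef 0 k = of_real (\<Sum>j<r. real (card (Blen (k-j))))"
  unfolding Gcoef_def by simp

definition Bps :: "complex \<Rightarrow> complex fps" where "Bps t = Abs_fps (Bcoef q r f t)"
definition Gps :: "complex \<Rightarrow> complex fps" where "Gps t = Abs_fps (Gcoef t)"
definition Qps :: "complex \<Rightarrow> complex fps" where "Qps t = 1 - fps_X - fps_X^r * Bps t"
definition Qfun :: "complex \<Rightarrow> complex \<Rightarrow> complex" where "Qfun t x = 1 - x - x^r * Bfun q r f x t"
definition Gfun :: "complex \<Rightarrow> complex \<Rightarrow> complex" where "Gfun t x = eval_fps (Gps t) x"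
definition rconv :: real where "rconv = 1 / gam"

lemma rconv_pos: "rconv > 0" unfolding rconv_def using gam_bounds by simp

lemma Bfun_eq_eval_Bps: "Bfun q r f x t = eval_fps (Bps t) x"
  unfolding Bfun_def eval_fps_def Bps_def by simp

lemma conv_radius_Bps: "norm t \<le> tmax \<Longrightarrow> ereal rconv \<le> fps_conv_radius (Bps t)"
  unfolding fps_conv_radius_def Bps_def rconv_def using norm_Bcoef_le gam_bounds
  by (intro conv_radius_ge_geometric[where A=Acoef]) auto

lemma conv_radius_Gps: "norm t \<le> tmax \<Longrightarrow> ereal rconv \<le> fps_conv_radius (Gps t)"
  unfolding fps_conv_radius_def Gps_def rconv_def using norm_Gcoef_le gam_bounds
  by (intro conv_radius_ge_geometric[where A=Acoef]) auto

lemma conv_radius_Qps: "norm t \<le> tmax \<Longrightarrow> ereal rconv \<le> fps_conv_radius (Qps t)"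
proof -
  assume t: "norm t \<le> tmax"
  have "ereal rconv \<le> fps_conv_radius (fps_X^r * Bps t)"
    using fps_conv_radius_mult[of "fps_X^r" "Bps t"] conv_radius_Bps[OF t] by (simp add: min_def split: if_splits)
  moreover have "fps_conv_radius (1 - fps_X :: complex fps) = \<infinity>"
    using fps_conv_radius_diff[of 1 "fps_X :: complex fps"] by simp
  moreover have "min (fps_conv_radius (1 - fps_X :: complex fps)) (fps_conv_radius (fps_X^r*Bps t)) \<le> fps_conv_radius (1 - fps_X - fps_X^r * Bps t)"
    by (rule fps_conv_radius_diff)
  ultimately have "ereal rconv \<le> fps_conv_radius (1 - fps_X - fps_X^r * Bps t)" by simp
  thus ?thesis unfolding Qps_def .
qed

lemma eval_Qps: assumes t: "norm t \<le> tmax" and x: "norm x < rconv"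
  shows "eval_fps (Qps t) x = Qfun t x"
proof -
  have xb: "ereal (norm x) < fps_conv_radius (Bps t)" using conv_radius_Bps[OF t] x by (intro ereal_le_less)
  have "eval_fps (fps_X^r * Bps t) x = x^r * eval_fps (Bps t) x"
    using xb by (subst eval_fps_mult) auto
  moreover have "ereal (norm x) < fps_conv_radius (fps_X^r * Bps t)"
    using fps_conv_radius_mult[of "fps_X^r" "Bps t"] xb by (simp add: min_def split: if_splits)
  moreover have "fps_conv_radius (1 - fps_X :: complex fps) = \<infinity>"
    using fps_conv_radius_diff[of 1 "fps_X :: complex fps"] by simp
  ultimately have "eval_fps (1 - fps_X - fps_X^r * Bps t) x = eval_fps (1 - fps_X) x - x^r * eval_fps (Bps t) x"
    by (subst eval_fps_diff) auto
  also have "eval_fps (1 - fps_X) x = 1 - x" by (subst eval_fps_diff) auto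
  finally show ?thesis unfolding Qps_def Qfun_def Bfun_eq_eval_Bps .
qed

lemma Fcoef_at_0: "Fcoef q f 0 k = of_nat (q^k)" unfolding Fcoef_def by simp

lemma Qps_0_factor: "Qps 0 = (1 + Gps 0) * (1 - fps_const (of_nat q) * fps_X)"
proof -
  define U where "U = Abs_fps (Fcoef q f 0)"
  have id: "U = 1 + fps_X * U + fps_X^r * (Bps 0 * U) + Gps 0"
    using Fcoef_fps_equation[of 0] unfolding U_def Bps_def Gps_def .
  have UQ: "U * Qps 0 = 1 + Gps 0"
  proof -
    have "U * Qps 0 = U - fps_X * U - fps_X^r * (Bps 0 * U)" unfolding Qps_def by (simp add: algebra_simps)
    also have "\<dots> = 1 + Gps 0" using id by (simp add: algebra_simps)
    finally show ?thesis .
  qed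
  have U1: "U * (1 - fps_const (of_nat q) * fps_X) = 1"
  proof (rule fps_ext)
    fix n show "(U * (1 - fps_const (of_nat q) * fps_X)) $ n = 1 $ n"
    proof (cases n)
      case 0 thus ?thesis unfolding U_def by (simp add: Fcoef_at_0)
    next
      case (Suc m)
      have "(U * (1 - fps_const (of_nat q) * fps_X)) $ n = U $ n - of_nat q * U $ m"
        using Suc by (simp add: algebra_simps fps_mult_fps_X_commute[symmetric] mult.assoc)
      also have "\<dots> = 0" unfolding U_def using Suc by (simp add: Fcoef_at_0)
      finally show ?thesis using Suc by simp
    qed
  qed
  have "Qps 0 = Qps 0 * (U * (1 - fps_const (of_nat q) * fps_X))" using U1 by simp
  also have "\<dots> = (U * Qps 0) * (1 - fps_const (of_nat q) * fps_X)" by (simp add: mult_ac)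
  finally show ?thesis using UQ by simp
qed

lemma Qfun_0_factor: assumes x: "norm x < rconv"
  shows "Qfun 0 x = (1 + Gfun 0 x) * (1 - of_nat q * x)"
proof -
  note t = norm_0_le_tmax
  have xg: "ereal (norm x) < fps_conv_radius (Gps 0)" using conv_radius_Gps[OF t] x by (intro ereal_le_less)
  have "Qfun 0 x = eval_fps (Qps 0) x" using eval_Qps[OF t x] by simp
  also have "\<dots> = eval_fps (1 + Gps 0) x * eval_fps (1 - fps_const (of_nat q) * fps_X) x"
    unfolding Qps_0_factor using xg fps_conv_radius_add[of 1 "Gps 0"]
    by (subst eval_fps_mult) (auto simp: fps_conv_radius_linear min_def split: if_splits intro: less_le_trans)
  also have "eval_fps (1 + Gps 0) x = 1 + Gfun 0 x" unfolding Gfun_def using xg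
    by (subst eval_fps_add) auto
  also have "eval_fps (1 - fps_const (of_nat q) * fps_X) x = 1 - of_nat q * x"
    by (subst eval_fps_diff) (auto simp: eval_fps_mult fps_conv_radius_const_X)
  finally show ?thesis .
qed

section \<open>The case t = 0\<close>

definition bcount :: "nat \<Rightarrow> real" where "bcount k = real (card (Blen k))"
definition gcount :: "nat \<Rightarrow> real" where "gcount k = (\<Sum>j<r. real (card (Blen (k-j))))"
definition Breal :: "real \<Rightarrow> real" where "Breal s = (\<Sum>k. bcount k * s^k)"
definition Greal :: "real \<Rightarrow> real" where "Greal s = (\<Sum>k. gcount k * s^k)"
definition x0 :: real where "x0 = 1 / real q"

lemma x0_bounds: "0 < x0" "x0 < rconv"
  unfolding x0_def rconv_def using gam_bounds q_pos by (auto simp: field_simps)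

lemma bcount_nonneg: "bcount k \<ge> 0" unfolding bcount_def by simp
lemma gcount_nonneg: "gcount k \<ge> 0" unfolding gcount_def by (simp add: sum_nonneg)

lemma Bcoef_at_0_real: "Bcoef q r f 0 k = of_real (bcount k)" unfolding Bcoef_at_0 bcount_def by simp
lemma Gcoef_at_0_real: "Gcoef 0 k = of_real (gcount k)" unfolding Gcoef_at_0 gcount_def by simp

lemma bcount_le: "norm (bcount k) \<le> Acoef * gam ^ k"
  using norm_Bcoef_le[OF norm_0_le_tmax, of k] unfolding Bcoef_at_0_real by simp
lemma gcount_le: "norm (gcount k) \<le> Acoef * gam ^ k"
  using norm_Gcoef_le[OF norm_0_le_tmax, of k] unfolding Gcoef_at_0_real by simp

lemma real_powser_sums:
  fixes c :: "nat \<Rightarrow> real"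
  assumes cb: "\<And>k. norm (c k) \<le> Acoef * gam ^ k" and s: "0 \<le> s" "s < rconv"
  shows "summable (\<lambda>k. c k * s^k)" "(\<lambda>k. of_real (c k) * (of_real s :: complex)^k) sums of_real (\<Sum>k. c k * s^k)"
proof -
  have gs: "gam * s < 1" using s gam_bounds unfolding rconv_def by (simp add: field_simps)
  have b: "norm (c k * s^k) \<le> Acoef * (gam * s) ^ k" for k
  proof -
    have "norm (c k * s^k) = norm (c k) * s^k" using s by (simp add: abs_mult)
    also have "\<dots> \<le> Acoef * gam^k * s^k" using cb s by (intro mult_right_mono) auto
    finally show ?thesis by (simp add: power_mult_distrib mult.assoc)
  qed
  have sg: "summable (\<lambda>k. Acoef * (gam * s) ^ k)" using gs s gam_bounds by (intro summable_mult summable_geometric) simp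
  show sm: "summable (\<lambda>k. c k * s^k)" by (rule summable_comparison_test'[OF sg]) (use b in auto)
  show "(\<lambda>k. of_real (c k) * (of_real s :: complex)^k) sums of_real (\<Sum>k. c k * s^k)"
    using sums_of_real[OF summable_sums[OF sm]] by simp
qed

lemma Bfun_0_real: assumes "0 \<le> s" "s < rconv"
  shows "Bfun q r f (of_real s) 0 = of_real (Breal s)" "Breal s \<ge> 0"
proof -
  show "Bfun q r f (of_real s) 0 = of_real (Breal s)"
    unfolding Bfun_def Bcoef_at_0_real Breal_def using real_powser_sums(2)[OF bcount_le assms] by (simp add: sums_iff)
  show "Breal s \<ge> 0" unfolding Breal_def
    using real_powser_sums(1)[OF bcount_le assms] bcount_nonneg assms by (intro suminf_nonneg) auto
qed

lemma Gfun_0_real: assumes "0 \<le> s" "s < rconv"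
  shows "Gfun 0 (of_real s) = of_real (Greal s)" "Greal s \<ge> 0"
proof -
  show "Gfun 0 (of_real s) = of_real (Greal s)"
    unfolding Gfun_def eval_fps_def Gps_def Gcoef_at_0_real Greal_def using real_powser_sums(2)[OF gcount_le assms]
    by (simp add: sums_iff)
  show "Greal s \<ge> 0" unfolding Greal_def
    using real_powser_sums(1)[OF gcount_le assms] gcount_nonneg assms by (intro suminf_nonneg) auto
qed

lemma norm_Bfun_0_le: assumes x: "norm x < rconv" shows "norm (Bfun q r f x 0) \<le> Breal (norm x)"
proof -
  have sm: "summable (\<lambda>k. bcount k * norm x ^ k)" using real_powser_sums(1)[OF bcount_le, of "norm x"] x by simp
  have eq: "(\<lambda>k. norm (Bcoef q r f 0 k * x^k)) = (\<lambda>k. bcount k * norm x ^ k)"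
    unfolding Bcoef_at_0_real using bcount_nonneg by (simp add: norm_mult norm_power)
  have "norm (Bfun q r f x 0) \<le> (\<Sum>k. norm (Bcoef q r f 0 k * x^k))"
    unfolding Bfun_def by (rule summable_norm) (use sm eq in simp)
  thus ?thesis unfolding eq Breal_def .
qed

lemma Qfun_0_real_factor: assumes "0 \<le> s" "s < rconv"
  shows "1 - s - s^r * Breal s = (1 + Greal s) * (1 - real q * s)"
proof -
  have "norm (of_real s :: complex) < rconv" using assms by simp
  from Qfun_0_factor[OF this] have "Qfun 0 (of_real s) = (1 + Gfun 0 (of_real s)) * (1 - of_nat q * of_real s)" .
  hence "of_real (1 - s - s^r * Breal s) = (of_real ((1 + Greal s) * (1 - real q * s)) :: complex)"
    unfolding Qfun_def Bfun_0_real[OF assms] Gfun_0_real[OF assms] by simp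
  thus ?thesis using of_real_eq_iff by blast
qed

lemma Qfun_0_x0: "Qfun 0 (of_real x0) = 0"
proof -
  have "norm (of_real x0 :: complex) < rconv" using x0_bounds by simp
  from Qfun_0_factor[OF this] show ?thesis unfolding x0_def using q_pos by simp
qed

(* B(.,0) has nonnegative coefficients, so for s = |x| \<le> x0 we get |x| + |x^r B(x,0)| \<le> s + s^r B(s,0) \<le> 1;
   a root x of Qfun 0 makes this an equality case of the triangle inequality, forcing x = s. *)
lemma Qfun_0_root_unique: assumes x: "norm x \<le> x0" and z: "Qfun 0 x = 0" shows "x = of_real x0"
proof -
  define s where "s = norm x"
  have s: "0 \<le> s" "s < rconv" "s \<le> x0" using x x0_bounds unfolding s_def by auto
  define W where "W = x^r * Bfun q r f x 0"
  have sum1: "x + W = 1" using z unfolding Qfun_def W_def by (simp add: algebra_simps)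
  have "norm W \<le> s^r * Breal s"
    unfolding W_def s_def norm_mult norm_power using norm_Bfun_0_le s unfolding s_def
    by (intro mult_left_mono) auto
  moreover have "1 - s - s^r * Breal s \<ge> 0"
  proof -
    have "1 - real q * s \<ge> 0" using s unfolding x0_def using q_pos by (simp add: field_simps)
    thus ?thesis using Qfun_0_real_factor[OF s(1,2)] Gfun_0_real(2)[OF s(1,2)] by simp
  qed
  ultimately have "norm x + norm W \<le> 1" unfolding s_def by linarith
  from complex_sum_one_real[OF sum1 this] have xr: "Im x = 0" "0 \<le> Re x" .
  hence xs: "x = of_real s" unfolding s_def by (simp add: complex_eq_iff cmod_def)
  have "of_real (1 - s - s^r * Breal s) = Qfun 0 x" unfolding xs Qfun_def Bfun_0_real[OF s(1,2)] by simp
  hence "(of_real (1 - s - s^r * Breal s) :: complex) = of_real 0" using z by simp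
  hence "1 - s - s^r * Breal s = 0" using of_real_eq_iff by blast
  hence "(1 + Greal s) * (1 - real q * s) = 0" using Qfun_0_real_factor[OF s(1,2)] by simp
  moreover have "1 + Greal s > 0" using Gfun_0_real(2)[OF s(1,2)] by simp
  ultimately have "1 - real q * s = 0" by simp
  hence "s = x0" unfolding x0_def using q_pos by (simp add: field_simps)
  thus ?thesis using xs by simp
qed

section \<open>Perturbation bounds in t\<close>

definition rcomp :: real where "rcomp = (x0 + rconv) / 2"
definition Ldiff :: real where "Ldiff = Acoef / (tmax * (1 - gam * rcomp))"
definition Qbound :: real where "Qbound = 2 + Acoef / (1 - gam * rcomp)"

lemma rcomp_bounds: "x0 < rcomp" "rcomp < rconv" "rcomp < 1" "gam * rcomp < 1" "0 < rcomp" "1 - gam * rcomp > 0"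
proof -
  show "x0 < rcomp" "rcomp < rconv" unfolding rcomp_def using x0_bounds by auto
  moreover have "rconv \<le> 1" unfolding rconv_def using gam_bounds by simp
  ultimately show "rcomp < 1" by simp
  show g: "gam * rcomp < 1" using \<open>rcomp < rconv\<close> gam_bounds unfolding rconv_def by (simp add: field_simps)
  show "0 < rcomp" using x0_bounds \<open>x0 < rcomp\<close> by simp
  show "1 - gam * rcomp > 0" using g by simp
qed

lemma Ldiff_pos: "Ldiff > 0" unfolding Ldiff_def using Acoef_pos tmax_pos rcomp_bounds by simp

lemma norm_Bfun_diff_le: assumes t: "norm t \<le> tmax" and x: "norm x \<le> rcomp"
  shows "norm (Bfun q r f x t - Bfun q r f x 0) \<le> norm t * Ldiff"
proof -
  have g0: "gam \<ge> 0" using gam_bounds by simp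
  have s1: "summable (\<lambda>k. Bcoef q r f t k * x^k)"
    using powser_geometric_bound(1)[OF norm_Bcoef_le[OF t] g0 x rcomp_bounds(4)] .
  have s2: "summable (\<lambda>k. Bcoef q r f 0 k * x^k)"
    using powser_geometric_bound(1)[OF norm_Bcoef_le[OF norm_0_le_tmax] g0 x rcomp_bounds(4)] .
  have "Bfun q r f x t - Bfun q r f x 0 = (\<Sum>k. (Bcoef q r f t k - Bcoef q r f 0 k) * x^k)"
    unfolding Bfun_def using suminf_diff[OF s1 s2] by (simp add: algebra_simps)
  also have "norm \<dots> \<le> (norm t / tmax * Acoef) / (1 - gam * rcomp)"
    using norm_Bcoef_diff_le[OF t] g0 x rcomp_bounds(4) by (intro powser_geometric_bound(2)) (auto simp: mult.assoc)
  also have "\<dots> = norm t * Ldiff" unfolding Ldiff_def by simp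
  finally show ?thesis .
qed

lemma norm_Gfun_diff_le: assumes t: "norm t \<le> tmax" and x: "norm x \<le> rcomp"
  shows "norm (Gfun t x - Gfun 0 x) \<le> norm t * Ldiff"
proof -
  have g0: "gam \<ge> 0" using gam_bounds by simp
  have s1: "summable (\<lambda>k. Gcoef t k * x^k)"
    using powser_geometric_bound(1)[OF norm_Gcoef_le[OF t] g0 x rcomp_bounds(4)] .
  have s2: "summable (\<lambda>k. Gcoef 0 k * x^k)"
    using powser_geometric_bound(1)[OF norm_Gcoef_le[OF norm_0_le_tmax] g0 x rcomp_bounds(4)] .
  have "Gfun t x - Gfun 0 x = (\<Sum>k. (Gcoef t k - Gcoef 0 k) * x^k)"
    unfolding Gfun_def eval_fps_def Gps_def using suminf_diff[OF s1 s2] by (simp add: algebra_simps)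
  also have "norm \<dots> \<le> (norm t / tmax * Acoef) / (1 - gam * rcomp)"
    using norm_Gcoef_diff_le[OF t] g0 x rcomp_bounds(4) by (intro powser_geometric_bound(2)) (auto simp: mult.assoc)
  also have "\<dots> = norm t * Ldiff" unfolding Ldiff_def by simp
  finally show ?thesis .
qed

lemma norm_Gfun_le: assumes t: "norm t \<le> tmax" and x: "norm x \<le> rcomp"
  shows "norm (Gfun t x) \<le> Acoef / (1 - gam * rcomp)"
  unfolding Gfun_def eval_fps_def Gps_def fps_nth_Abs_fps using gam_bounds
  by (intro powser_geometric_bound(2)[OF norm_Gcoef_le[OF t] _ x rcomp_bounds(4)]) auto

lemma norm_Bfun_le: assumes t: "norm t \<le> tmax" and x: "norm x \<le> rcomp"
  shows "norm (Bfun q r f x t) \<le> Acoef / (1 - gam * rcomp)"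
  unfolding Bfun_def using gam_bounds
  by (intro powser_geometric_bound(2)[OF norm_Bcoef_le[OF t] _ x rcomp_bounds(4)]) auto

lemma norm_power_r_le_1: "norm (x::complex) \<le> rcomp \<Longrightarrow> norm (x^r) \<le> 1"
  using rcomp_bounds by (simp add: norm_power power_le_one)

lemma norm_Qfun_diff_le: assumes t: "norm t \<le> tmax" and x: "norm x \<le> rcomp"
  shows "norm (Qfun t x - Qfun 0 x) \<le> norm t * Ldiff"
proof -
  have "Qfun t x - Qfun 0 x = - (x^r * (Bfun q r f x t - Bfun q r f x 0))"
    unfolding Qfun_def by (simp add: algebra_simps)
  hence "norm (Qfun t x - Qfun 0 x) = norm (x^r) * norm (Bfun q r f x t - Bfun q r f x 0)"
    by (simp add: norm_mult)
  also have "\<dots> \<le> 1 * (norm t * Ldiff)"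
    using norm_power_r_le_1[OF x] norm_Bfun_diff_le[OF t x] by (intro mult_mono) auto
  finally show ?thesis by simp
qed

lemma norm_Qfun_le: assumes t: "norm t \<le> tmax" and x: "norm x \<le> rcomp"
  shows "norm (Qfun t x) \<le> Qbound"
proof -
  have "norm (Qfun t x) \<le> norm (1 - x) + norm (x^r * Bfun q r f x t)"
    unfolding Qfun_def by (rule norm_triangle_ineq4)
  also have "norm (1 - x) \<le> 1 + norm x" by (rule norm_triangle_ineq4[of 1 x, simplified])
  also have "norm x \<le> 1" using x rcomp_bounds by simp
  also have "norm (x^r * Bfun q r f x t) \<le> 1 * (Acoef / (1 - gam * rcomp))"
    unfolding norm_mult using norm_power_r_le_1[OF x] norm_Bfun_le[OF t x] by (intro mult_mono) auto
  finally show ?thesis unfolding Qbound_def by simp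
qed

lemma Qfun_eq: "Qfun t = (\<lambda>x. 1 - x - x^r * eval_fps (Bps t) x)"
  unfolding Qfun_def Bfun_eq_eval_Bps by simp

lemma holomorphic_Qfun: assumes t: "norm t \<le> tmax" shows "Qfun t holomorphic_on ball 0 rconv"
proof -
  have "ball 0 rconv \<subseteq> eball 0 (fps_conv_radius (Bps t))"
    using conv_radius_Bps[OF t] by (auto intro: ereal_le_less)
  thus ?thesis unfolding Qfun_eq by (intro holomorphic_intros) auto
qed

lemma holomorphic_Gfun: assumes t: "norm t \<le> tmax" shows "Gfun t holomorphic_on ball 0 rconv"
proof -
  have "ball 0 rconv \<subseteq> eball 0 (fps_conv_radius (Gps t))"
    using conv_radius_Gps[OF t] by (auto intro: ereal_le_less)
  thus ?thesis unfolding Gfun_def[abs_def] by (intro holomorphic_intros) auto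
qed

definition dQ0 :: complex where "dQ0 = - of_nat q * (1 + Gfun 0 (of_real x0))"

lemma Qfun_0_has_derivative: "(Qfun 0 has_field_derivative dQ0) (at (of_real x0))"
proof -
  have x0b: "of_real x0 \<in> ball (0::complex) rconv" using x0_bounds by simp
  have hg: "(Gfun 0 has_field_derivative deriv (Gfun 0) (of_real x0)) (at (of_real x0))"
    using holomorphic_Gfun[OF norm_0_le_tmax] x0b by (intro holomorphic_derivI) auto
  have "((\<lambda>x. (1 + Gfun 0 x) * (1 - of_nat q * x)) has_field_derivative
          deriv (Gfun 0) (of_real x0) * (1 - of_nat q * of_real x0) + (1 + Gfun 0 (of_real x0)) * (- of_nat q))
        (at (of_real x0))"
    by (rule derivative_eq_intros hg refl | simp)+
  moreover have "1 - of_nat q * (of_real x0 :: complex) = 0" unfolding x0_def using q_pos by simp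
  ultimately have "((\<lambda>x. (1 + Gfun 0 x) * (1 - of_nat q * x)) has_field_derivative dQ0) (at (of_real x0))"
    unfolding dQ0_def by (simp add: mult.commute)
  thus ?thesis
  proof (rule has_field_derivative_transform_within_open[where S="ball 0 rconv"])
    show "open (ball (0::complex) rconv)" by simp
    show "of_real x0 \<in> ball (0::complex) rconv" by (rule x0b)
    fix x :: complex assume "x \<in> ball 0 rconv"
    thus "(1 + Gfun 0 x) * (1 - of_nat q * x) = Qfun 0 x" using Qfun_0_factor by simp
  qed
qed

lemma norm_dQ0_ge: "norm dQ0 \<ge> 1"
proof -
  have "Gfun 0 (of_real x0) = of_real (Greal x0)" "Greal x0 \<ge> 0" using Gfun_0_real x0_bounds by auto
  moreover have "(1::complex) + of_real (Greal x0) = of_real (1 + Greal x0)" by simp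
  ultimately have "norm (1 + Gfun 0 (of_real x0)) = 1 + Greal x0" by (simp only: norm_of_real)
  hence "norm dQ0 = real q * (1 + Greal x0)" unfolding dQ0_def by (simp add: norm_mult)
  also have "\<dots> \<ge> 1 * 1" using q_pos \<open>Greal x0 \<ge> 0\<close> by (intro mult_mono) auto
  finally show ?thesis by simp
qed

lemma deriv_Qfun_0_x0: "deriv (Qfun 0) (of_real x0) = dQ0" using Qfun_0_has_derivative by (rule DERIV_imp_deriv)

section \<open>The dominant root\<close>

definition rcauchy :: real where "rcauchy = (rcomp - x0) / 2"
(* eta makes the Cauchy bound for the second derivative keep deriv (Qfun 0) within |dQ0|/4 of dQ0
   on Droot. *)
definition eta :: real where "eta = min x0 (min rcauchy (norm dQ0 * rcauchy^2 / (8 * Qbound)))"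

lemma rcauchy_pos: "rcauchy > 0" unfolding rcauchy_def using rcomp_bounds by simp
lemma Qbound_pos: "Qbound > 0"
proof -
  have "Acoef / (1 - gam * rcomp) > 0" using Acoef_pos rcomp_bounds(6) by simp
  thus ?thesis unfolding Qbound_def by simp
qed
lemma eta_pos: "eta > 0"
proof -
  have "norm dQ0 * rcauchy^2 / (8 * Qbound) > 0" using rcauchy_pos Qbound_pos norm_dQ0_ge by (intro divide_pos_pos mult_pos_pos) auto
  thus ?thesis unfolding eta_def using rcauchy_pos x0_bounds by simp
qed
lemma eta_bounds: "eta \<le> rcauchy" "eta \<le> x0" "eta * (2 * Qbound / rcauchy^2) \<le> norm dQ0 / 4"
proof -
  show "eta \<le> rcauchy" "eta \<le> x0" unfolding eta_def by auto
  have "eta \<le> norm dQ0 * rcauchy^2 / (8 * Qbound)" unfolding eta_def by auto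
  hence "eta * (2 * Qbound / rcauchy^2) \<le> norm dQ0 * rcauchy^2 / (8 * Qbound) * (2 * Qbound / rcauchy^2)"
    using Qbound_pos rcauchy_pos by (intro mult_right_mono) auto
  also have "\<dots> = norm dQ0 / 4" using Qbound_pos rcauchy_pos by (simp add: field_simps)
  finally show "eta * (2 * Qbound / rcauchy^2) \<le> norm dQ0 / 4" .
qed

definition Droot :: "complex set" where "Droot = cball (of_real x0) eta"

lemma Droot_norm: "w \<in> Droot \<Longrightarrow> norm w + rcauchy \<le> rcomp"
proof -
  assume "w \<in> Droot"
  hence "norm (w - of_real x0) \<le> eta" unfolding Droot_def by (simp add: dist_norm norm_minus_commute)
  hence "norm w \<le> x0 + eta" using norm_triangle_sub[of w "of_real x0"] x0_bounds by simp
  moreover have "x0 + 2 * rcauchy = rcomp" unfolding rcauchy_def by (simp add: field_simps)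
  ultimately show ?thesis using eta_bounds(1) by linarith
qed

lemma Droot_le_rcomp: "w \<in> Droot \<Longrightarrow> norm w \<le> rcomp" using Droot_norm rcauchy_pos by fastforce

lemma holomorphic_Qfun_0: "Qfun 0 holomorphic_on ball 0 rconv" by (rule holomorphic_Qfun[OF norm_0_le_tmax])

lemma deriv_Qfun_0_near_x0: assumes w: "w \<in> Droot" shows "norm (deriv (Qfun 0) w - dQ0) \<le> norm dQ0 / 4"
proof -
  have hd: "deriv (Qfun 0) holomorphic_on ball 0 rconv" by (intro holomorphic_deriv holomorphic_Qfun_0) simp
  have DB: "Droot \<subseteq> ball 0 rconv" using Droot_le_rcomp rcomp_bounds by fastforce
  have "norm (deriv (Qfun 0) w - deriv (Qfun 0) (of_real x0)) \<le> (2 * Qbound / rcauchy^2) * norm (w - of_real x0)"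
  proof (rule field_differentiable_bound[where f'="deriv (deriv (Qfun 0))"])
    show "convex Droot" unfolding Droot_def by simp
    fix z assume z: "z \<in> Droot"
    show "(deriv (Qfun 0) has_field_derivative deriv (deriv (Qfun 0)) z) (at z within Droot)"
      by (rule holomorphic_derivI[OF hd]) (use DB z in auto)
    have "norm ((deriv ^^ 2) (Qfun 0) z) \<le> fact 2 * Qbound / rcauchy ^ 2"
      using holomorphic_Qfun_0 Droot_norm[OF z] rcomp_bounds rcauchy_pos norm_Qfun_le[OF norm_0_le_tmax]
      by (intro Cauchy_inequality_ball[where Rbig=rconv and RR=rcomp and rc=rcauchy]) auto
    thus "norm (deriv (deriv (Qfun 0)) z) \<le> 2 * Qbound / rcauchy^2" by (simp add: numeral_2_eq_2)
  qed (use w eta_pos in \<open>auto simp: Droot_def\<close>)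
  also have "\<dots> \<le> (2 * Qbound / rcauchy^2) * eta"
    using w Qbound_pos unfolding Droot_def by (intro mult_left_mono) (auto simp: dist_norm norm_minus_commute)
  also have "\<dots> \<le> norm dQ0 / 4" using eta_bounds(3) by (simp add: mult.commute)
  finally show ?thesis using deriv_Qfun_0_x0 by simp
qed

lemma deriv_Qfun_diff_le: assumes t: "norm t \<le> tmax" and w: "w \<in> Droot"
  shows "norm (deriv (Qfun t) w - deriv (Qfun 0) w) \<le> norm t * Ldiff / rcauchy"
proof -
  have wb: "w \<in> ball 0 rconv" using Droot_le_rcomp[OF w] rcomp_bounds by simp
  have E: "(\<lambda>x. Qfun t x - Qfun 0 x) holomorphic_on ball 0 rconv"
    using holomorphic_Qfun[OF t] holomorphic_Qfun_0 by (intro holomorphic_intros)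
  have "norm ((deriv ^^ 1) (\<lambda>x. Qfun t x - Qfun 0 x) w) \<le> fact 1 * (norm t * Ldiff) / rcauchy ^ 1"
    using E Droot_norm[OF w] rcomp_bounds rcauchy_pos norm_Qfun_diff_le[OF t]
    by (intro Cauchy_inequality_ball[where Rbig=rconv and RR=rcomp and rc=rcauchy]) auto
  moreover have "deriv (\<lambda>x. Qfun t x - Qfun 0 x) w = deriv (Qfun t) w - deriv (Qfun 0) w"
    using holomorphic_Qfun[OF t] holomorphic_Qfun_0 wb
    by (intro deriv_diff) (auto intro: holomorphic_on_imp_differentiable_at)
  ultimately show ?thesis by simp
qed

(* Qfun 0 has no zero in Kfar, so |Qfun 0| \<ge> m0 there by compactness; th is a modulus of uniform
   continuity that carries this bound radially out to |x| \<le> x0 + th. *)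
definition Kfar :: "complex set" where "Kfar = cball 0 x0 \<inter> {x. eta / 2 \<le> dist x (of_real x0)}"

lemma m0_ex: "\<exists>m>0. \<forall>x\<in>Kfar. m \<le> norm (Qfun 0 x)"
proof -
  have comp: "compact Kfar" unfolding Kfar_def
    by (intro compact_Int_closed compact_cball closed_Collect_le continuous_intros)
  have "- of_real x0 \<in> Kfar" unfolding Kfar_def using eta_bounds x0_bounds
    by (auto simp: dist_norm norm_minus_commute)
  hence ne: "Kfar \<noteq> {}" by blast
  have sub: "Kfar \<subseteq> ball 0 rconv" unfolding Kfar_def using x0_bounds by auto
  have cont: "continuous_on Kfar (\<lambda>x. norm (Qfun 0 x))"
    using holomorphic_on_imp_continuous_on[OF holomorphic_Qfun_0] sub
    by (intro continuous_on_norm) (rule continuous_on_subset)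
  obtain xm where xm: "xm \<in> Kfar" "\<forall>y\<in>Kfar. norm (Qfun 0 xm) \<le> norm (Qfun 0 y)"
    using continuous_attains_inf[OF comp ne cont] by blast
  have "Qfun 0 xm \<noteq> 0"
  proof
    assume "Qfun 0 xm = 0"
    moreover have "norm xm \<le> x0" using xm(1) unfolding Kfar_def by auto
    ultimately have "xm = of_real x0" using Qfun_0_root_unique by blast
    thus False using xm(1) eta_pos unfolding Kfar_def by auto
  qed
  thus ?thesis using xm by (intro exI[of _ "norm (Qfun 0 xm)"]) auto
qed

definition m0 :: real where "m0 = (SOME m. m > 0 \<and> (\<forall>x\<in>Kfar. m \<le> norm (Qfun 0 x)))"

lemma m0: "m0 > 0" "\<And>x. x \<in> Kfar \<Longrightarrow> m0 \<le> norm (Qfun 0 x)"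
  using someI_ex[OF m0_ex] unfolding m0_def[symmetric] by auto

lemma th_ex: "\<exists>th>0. th \<le> eta / 2 \<and> th \<le> rcauchy \<and> th \<le> x0 \<and>
   (\<forall>x y. norm x \<le> rcomp \<and> norm y \<le> rcomp \<and> dist x y \<le> th \<longrightarrow>
      dist (Qfun 0 x) (Qfun 0 y) < m0 / 2 \<and> dist (Gfun 0 x) (Gfun 0 y) < 1/4)"
proof -
  have sub: "cball 0 rcomp \<subseteq> ball (0::complex) rconv" using rcomp_bounds by auto
  have uq: "uniformly_continuous_on (cball 0 rcomp) (Qfun 0)"
    using holomorphic_on_imp_continuous_on[OF holomorphic_Qfun_0] sub
    by (intro compact_uniformly_continuous) (auto intro: continuous_on_subset)
  have ug: "uniformly_continuous_on (cball 0 rcomp) (Gfun 0)"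
    using holomorphic_on_imp_continuous_on[OF holomorphic_Gfun[OF norm_0_le_tmax]] sub
    by (intro compact_uniformly_continuous) (auto intro: continuous_on_subset)
  obtain e1 where e1: "e1 > 0" "\<forall>x\<in>cball 0 rcomp. \<forall>x'\<in>cball 0 rcomp. dist x' x < e1 \<longrightarrow> dist (Qfun 0 x') (Qfun 0 x) < m0/2"
    using uq[unfolded uniformly_continuous_on_def, rule_format, of "m0/2"] m0(1) by auto
  obtain e2 where e2: "e2 > 0" "\<forall>x\<in>cball 0 rcomp. \<forall>x'\<in>cball 0 rcomp. dist x' x < e2 \<longrightarrow> dist (Gfun 0 x') (Gfun 0 x) < 1/4"
    using ug[unfolded uniformly_continuous_on_def, rule_format, of "1/4"] by auto
  define th where "th = min (min e1 e2 / 2) (min (eta/2) (min rcauchy x0))"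
  have "th > 0" unfolding th_def using e1 e2 eta_pos rcauchy_pos x0_bounds by simp
  moreover have "\<forall>x y. norm x \<le> rcomp \<and> norm y \<le> rcomp \<and> dist x y \<le> th \<longrightarrow>
      dist (Qfun 0 x) (Qfun 0 y) < m0 / 2 \<and> dist (Gfun 0 x) (Gfun 0 y) < 1/4"
  proof (intro allI impI)
    fix x y :: complex assume h: "norm x \<le> rcomp \<and> norm y \<le> rcomp \<and> dist x y \<le> th"
    hence "dist x y < e1" "dist x y < e2" unfolding th_def using e1 e2 by auto
    thus "dist (Qfun 0 x) (Qfun 0 y) < m0 / 2 \<and> dist (Gfun 0 x) (Gfun 0 y) < 1/4"
      using e1(2) e2(2) h by auto
  qed
  moreover have "th \<le> eta / 2" "th \<le> rcauchy" "th \<le> x0" unfolding th_def by auto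
  ultimately show ?thesis by blast
qed

definition th :: real where "th = (SOME th. th>0 \<and> th \<le> eta / 2 \<and> th \<le> rcauchy \<and> th \<le> x0 \<and>
   (\<forall>x y. norm x \<le> rcomp \<and> norm y \<le> rcomp \<and> dist x y \<le> th \<longrightarrow>
      dist (Qfun 0 x) (Qfun 0 y) < m0 / 2 \<and> dist (Gfun 0 x) (Gfun 0 y) < 1/4))"

lemma th: "th > 0" "th \<le> eta / 2" "th \<le> rcauchy" "th \<le> x0"
  "\<And>x y. norm x \<le> rcomp \<Longrightarrow> norm y \<le> rcomp \<Longrightarrow> dist x y \<le> th \<Longrightarrow> dist (Qfun 0 x) (Qfun 0 y) < m0 / 2"
  "\<And>x y. norm x \<le> rcomp \<Longrightarrow> norm y \<le> rcomp \<Longrightarrow> dist x y \<le> th \<Longrightarrow> dist (Gfun 0 x) (Gfun 0 y) < 1/4"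
  using someI_ex[OF th_ex] unfolding th_def[symmetric] by blast+

lemma norm_Qfun_0_far: assumes x: "norm x \<le> x0 + th" and xd: "x \<notin> Droot"
  shows "norm (Qfun 0 x) \<ge> m0 / 2"
proof -
  have dx: "dist x (of_real x0) > eta" using xd unfolding Droot_def by (simp add: dist_commute)
  show ?thesis
  proof (cases "norm x \<le> x0")
    case True
    hence "x \<in> Kfar" unfolding Kfar_def using dx eta_pos by auto
    thus ?thesis using m0 by fastforce
  next
    case False
    hence xpos: "norm x > x0" by simp
    define y where "y = x * of_real (x0 / norm x)"
    have ny: "norm y = x0" and dxy: "dist x y = norm x - x0"
      unfolding y_def using radial_retraction[OF x0_bounds(1) xpos] by auto
    hence dxy': "dist x y \<le> th" using x by simp
    have "dist y (of_real x0) \<ge> dist x (of_real x0) - dist x y" using dist_triangle[of x "of_real x0" y]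
      by (simp add: dist_commute)
    hence "dist y (of_real x0) \<ge> eta / 2" using dx dxy' th(2) by linarith
    hence "y \<in> Kfar" unfolding Kfar_def using ny by simp
    hence "m0 \<le> norm (Qfun 0 y)" using m0 by blast
    moreover have "dist (Qfun 0 x) (Qfun 0 y) < m0 / 2"
      using th(5)[OF _ _ dxy'] x ny th(3) rcomp_bounds unfolding rcauchy_def by simp
    ultimately show ?thesis using norm_triangle_sub[of "Qfun 0 y" "Qfun 0 x"]
      by (simp add: dist_norm norm_minus_commute)
  qed
qed

(* For |t| \<le> tdisc the perturbation |Qfun t - Qfun 0| \<le> |t| Ldiff is smaller than all margins above. *)
definition Xc :: real where
  "Xc = min (norm dQ0 * rcauchy) (min (norm dQ0 * eta) (min (norm dQ0 * th / 2) (min m0 1)))"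
definition tdisc :: real where "tdisc = min tmax (Xc / (4 * Ldiff))"

lemma Xc_pos: "Xc > 0"
proof -
  have "norm dQ0 > 0" using norm_dQ0_ge by linarith
  thus ?thesis unfolding Xc_def using rcauchy_pos eta_pos th(1) m0(1) by simp
qed
lemma tdisc_pos: "tdisc > 0" unfolding tdisc_def using tmax_pos Xc_pos Ldiff_pos by simp

lemma tdisc_bounds: assumes "norm t \<le> tdisc" shows "norm t \<le> tmax" "norm t * Ldiff \<le> Xc / 4"
proof -
  show "norm t \<le> tmax" using assms unfolding tdisc_def by simp
  have "norm t \<le> Xc / (4 * Ldiff)" using assms unfolding tdisc_def by simp
  hence "norm t * Ldiff \<le> Xc / (4 * Ldiff) * Ldiff" using Ldiff_pos by (intro mult_right_mono) auto
  thus "norm t * Ldiff \<le> Xc / 4" using Ldiff_pos by simp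
qed

lemma tdisc_small: assumes "norm t \<le> tdisc"
  shows "norm t * Ldiff \<le> norm dQ0 * rcauchy / 4" "norm t * Ldiff \<le> norm dQ0 * eta / 4"
    "norm t * Ldiff \<le> norm dQ0 * th / 8" "norm t * Ldiff \<le> m0 / 4" "norm t * Ldiff \<le> 1/4"
  using tdisc_bounds(2)[OF assms] unfolding Xc_def by auto

lemma Droot_subset: "Droot \<subseteq> ball 0 rconv" using Droot_le_rcomp rcomp_bounds by fastforce

lemma deriv_Qfun_near_dQ0: assumes t: "norm t \<le> tdisc" and w: "w \<in> Droot"
  shows "norm (deriv (Qfun t) w - dQ0) \<le> norm dQ0 / 2"
proof -
  have "norm (deriv (Qfun t) w - dQ0) \<le> norm (deriv (Qfun t) w - deriv (Qfun 0) w) + norm (deriv (Qfun 0) w - dQ0)"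
    by (rule norm_diff_triangle_le) (rule order_refl)+
  also have "norm (deriv (Qfun t) w - deriv (Qfun 0) w) \<le> norm t * Ldiff / rcauchy" by (rule deriv_Qfun_diff_le[OF tdisc_bounds(1)[OF t] w])
  also have "norm t * Ldiff / rcauchy \<le> norm dQ0 / 4" using tdisc_small(1)[OF t] rcauchy_pos by (simp add: field_simps)
  also have "norm (deriv (Qfun 0) w - dQ0) \<le> norm dQ0 / 4" by (rule deriv_Qfun_0_near_x0[OF w])
  finally show ?thesis by simp
qed

(* Newton's map with the derivative frozen at (x0, t = 0); it is a 1/2-contraction of Droot. *)
definition Newton :: "complex \<Rightarrow> complex \<Rightarrow> complex" where "Newton t x = x - Qfun t x / dQ0"

lemma dQ0_nonzero: "dQ0 \<noteq> 0" using norm_dQ0_ge by auto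

lemma Newton_contraction: assumes t: "norm t \<le> tdisc" and x: "x \<in> Droot" and y: "y \<in> Droot"
  shows "norm (Newton t x - Newton t y) \<le> 1/2 * norm (x - y)"
proof (rule field_differentiable_bound[where f'="\<lambda>w. 1 - deriv (Qfun t) w / dQ0"])
  show "convex Droot" unfolding Droot_def by simp
  fix z assume z: "z \<in> Droot"
  have "(Qfun t has_field_derivative deriv (Qfun t) z) (at z within Droot)"
    by (rule holomorphic_derivI[OF holomorphic_Qfun[OF tdisc_bounds(1)[OF t]]]) (use Droot_subset z in auto)
  thus "(Newton t has_field_derivative 1 - deriv (Qfun t) z / dQ0) (at z within Droot)"
    unfolding Newton_def[abs_def] using dQ0_nonzero by (auto intro!: derivative_eq_intros)
  have "1 - deriv (Qfun t) z / dQ0 = (dQ0 - deriv (Qfun t) z) / dQ0" using dQ0_nonzero by (simp add: field_simps)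
  hence "norm (1 - deriv (Qfun t) z / dQ0) = norm (deriv (Qfun t) z - dQ0) / norm dQ0"
    by (simp add: norm_divide norm_minus_commute)
  also have "\<dots> \<le> (norm dQ0 / 2) / norm dQ0" using deriv_Qfun_near_dQ0[OF t z] norm_dQ0_ge by (intro divide_right_mono) auto
  also have "\<dots> = 1/2" using dQ0_nonzero by simp
  finally show "norm (1 - deriv (Qfun t) z / dQ0) \<le> 1/2" .
qed (use x y in auto)

lemma x0_in_Droot: "of_real x0 \<in> Droot" unfolding Droot_def using eta_pos by simp

lemma norm_Qfun_x0_le: assumes t: "norm t \<le> tmax" shows "norm (Qfun t (of_real x0)) \<le> norm t * Ldiff"
  using norm_Qfun_diff_le[OF t, of "of_real x0"] Qfun_0_x0 rcomp_bounds x0_bounds by simp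

lemma Newton_x0: assumes t: "norm t \<le> tdisc" shows "norm (Newton t (of_real x0) - of_real x0) \<le> norm t * Ldiff / norm dQ0"
  unfolding Newton_def using norm_Qfun_x0_le[OF tdisc_bounds(1)[OF t]] dQ0_nonzero by (simp add: norm_divide divide_right_mono)

lemma Newton_maps_Droot: assumes t: "norm t \<le> tdisc" and x: "x \<in> Droot" shows "Newton t x \<in> Droot"
proof -
  have "norm (Newton t x - of_real x0) \<le> norm (Newton t x - Newton t (of_real x0)) + norm (Newton t (of_real x0) - of_real x0)"
    by (rule norm_diff_triangle_le) (rule order_refl)+
  also have "\<dots> \<le> 1/2 * norm (x - of_real x0) + norm t * Ldiff / norm dQ0"
    using Newton_contraction[OF t x x0_in_Droot] Newton_x0[OF t] by (rule add_mono)
  also have "norm (x - of_real x0) \<le> eta" using x unfolding Droot_def by (simp add: dist_norm norm_minus_commute)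
  also have "norm t * Ldiff / norm dQ0 \<le> eta / 4"
  proof -
    have p: "norm dQ0 > 0" using norm_dQ0_ge by linarith
    have "norm t * Ldiff \<le> eta / 4 * norm dQ0" using tdisc_small(2)[OF t] by (simp add: mult.commute)
    thus ?thesis using p by (simp add: pos_divide_le_eq)
  qed
  finally show ?thesis unfolding Droot_def using eta_pos by (simp add: dist_norm norm_minus_commute)
qed

lemma root_in_Droot_unique: assumes t: "norm t \<le> tdisc" shows "\<exists>!a. a \<in> Droot \<and> Qfun t a = 0"
proof -
  have "\<exists>!a\<in>Droot. Newton t a = a"
  proof (rule Banach_fix[of Droot "1/2"])
    show "complete Droot" unfolding Droot_def by (simp add: complete_eq_closed)
    show "Droot \<noteq> {}" using x0_in_Droot by blast
    show "Newton t ` Droot \<subseteq> Droot" using Newton_maps_Droot[OF t] by blast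
    show "dist (Newton t x) (Newton t y) \<le> 1/2 * dist x y" if "x \<in> Droot" "y \<in> Droot" for x y
      using Newton_contraction[OF t that] by (simp add: dist_norm)
  qed auto
  moreover have "Newton t a = a \<longleftrightarrow> Qfun t a = 0" for a unfolding Newton_def using dQ0_nonzero by simp
  ultimately show ?thesis by auto
qed

definition alpha :: "complex \<Rightarrow> complex" where "alpha t = (THE a. a \<in> Droot \<and> Qfun t a = 0)"

lemma alpha_root: assumes t: "norm t \<le> tdisc" shows "alpha t \<in> Droot" "Qfun t (alpha t) = 0"
  using theI'[OF root_in_Droot_unique[OF t]] unfolding alpha_def by auto

lemma norm_Qfun_ge_in_Droot: assumes t: "norm t \<le> tdisc" and x: "x \<in> Droot"
  shows "norm (Qfun t x) \<ge> norm dQ0 / 2 * norm (x - alpha t)"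
proof -
  have "x - alpha t = (Newton t x - Newton t (alpha t)) + Qfun t x / dQ0"
    unfolding Newton_def using alpha_root(2)[OF t] by simp
  hence "norm (x - alpha t) \<le> norm (Newton t x - Newton t (alpha t)) + norm (Qfun t x / dQ0)"
    by (metis norm_triangle_ineq)
  also have "\<dots> \<le> 1/2 * norm (x - alpha t) + norm (Qfun t x) / norm dQ0"
    using Newton_contraction[OF t x alpha_root(1)[OF t]] by (simp add: norm_divide)
  finally have "norm (x - alpha t) / 2 \<le> norm (Qfun t x) / norm dQ0" by linarith
  moreover have "norm dQ0 > 0" using norm_dQ0_ge by linarith
  ultimately have "norm (x - alpha t) / 2 * norm dQ0 \<le> norm (Qfun t x)" by (simp add: pos_le_divide_eq)
  thus ?thesis by (simp add: mult.commute)
qed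

lemma alpha_near_x0: assumes t: "norm t \<le> tdisc" shows "norm (alpha t - of_real x0) \<le> th / 4"
proof -
  have "norm (alpha t - of_real x0) \<le> norm (Newton t (alpha t) - Newton t (of_real x0)) + norm (Newton t (of_real x0) - of_real x0)"
  proof -
    have "Newton t (alpha t) = alpha t" unfolding Newton_def using alpha_root(2)[OF t] by simp
    thus ?thesis using dist_triangle[of "Newton t (alpha t)" "of_real x0" "Newton t (of_real x0)", unfolded dist_norm]
      by simp
  qed
  also have "\<dots> \<le> 1/2 * norm (alpha t - of_real x0) + norm t * Ldiff / norm dQ0"
    using Newton_contraction[OF t alpha_root(1)[OF t] x0_in_Droot] Newton_x0[OF t] by (rule add_mono)
  finally have "norm (alpha t - of_real x0) \<le> 2 * (norm t * Ldiff / norm dQ0)" by linarith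
  also have "\<dots> \<le> th / 4"
  proof -
    have p: "norm dQ0 > 0" using norm_dQ0_ge by linarith
    have "norm t * Ldiff \<le> th / 8 * norm dQ0" using tdisc_small(3)[OF t] by (simp add: mult.commute)
    hence "norm t * Ldiff / norm dQ0 \<le> th / 8" using p by (simp add: pos_divide_le_eq)
    thus ?thesis by linarith
  qed
  finally show ?thesis .
qed

lemma alpha_norm_bounds: assumes t: "norm t \<le> tdisc"
  shows "norm (alpha t) \<le> x0 + th / 4" "norm (alpha t) \<ge> x0 - th / 4" "norm (alpha t) \<ge> x0 / 2"
    "alpha t \<noteq> 0"
proof -
  have c: "norm (alpha t - of_real x0) \<le> th / 4" by (rule alpha_near_x0[OF t])
  show "norm (alpha t) \<le> x0 + th / 4" using c norm_triangle_sub[of "alpha t" "of_real x0"] x0_bounds by simp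
  show a: "norm (alpha t) \<ge> x0 - th / 4" using c norm_triangle_sub[of "of_real x0" "alpha t"] x0_bounds
    by (simp add: norm_minus_commute)
  thus "norm (alpha t) \<ge> x0 / 2" using th(4) x0_bounds by linarith
  thus "alpha t \<noteq> 0" using x0_bounds by auto
qed

lemma norm_Qfun_far: assumes t: "norm t \<le> tdisc" and x: "norm x \<le> x0 + th" and xd: "x \<notin> Droot"
  shows "norm (Qfun t x) \<ge> m0 / 4"
proof -
  have xR: "norm x \<le> rcomp" using x th(3) unfolding rcauchy_def using rcomp_bounds by simp
  have "norm (Qfun 0 x) \<ge> m0 / 2" by (rule norm_Qfun_0_far[OF x xd])
  moreover have "norm (Qfun t x - Qfun 0 x) \<le> m0 / 4" using norm_Qfun_diff_le[OF tdisc_bounds(1)[OF t] xR] tdisc_small(4)[OF t] by simp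
  ultimately show ?thesis using norm_triangle_sub[of "Qfun 0 x" "Qfun t x"] by (simp add: norm_minus_commute)
qed

lemma alpha_unique: assumes t: "norm t \<le> tdisc" and x: "norm x \<le> x0 + th" and z: "Qfun t x = 0"
  shows "x = alpha t"
proof -
  have "x \<in> Droot" using norm_Qfun_far[OF t x] z m0(1) by (cases "x \<in> Droot") auto
  hence "norm dQ0 / 2 * norm (x - alpha t) \<le> 0" using norm_Qfun_ge_in_Droot[OF t] z by fastforce
  moreover have "norm dQ0 / 2 > 0" using norm_dQ0_ge by linarith
  ultimately have "norm (x - alpha t) \<le> 0" by (simp add: mult_le_0_iff)
  thus ?thesis by simp
qed

lemma norm_one_plus_Gfun_alpha_ge: assumes t: "norm t \<le> tdisc" shows "norm (1 + Gfun t (alpha t)) \<ge> 1/2"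
proof -
  have aR: "norm (alpha t) \<le> rcomp" using alpha_norm_bounds(1)[OF t] th(3) rcomp_bounds unfolding rcauchy_def by simp
  have x0R: "norm (of_real x0 :: complex) \<le> rcomp" using rcomp_bounds x0_bounds by simp
  have "Gfun 0 (of_real x0) = of_real (Greal x0)" "Greal x0 \<ge> 0" using Gfun_0_real x0_bounds by auto
  moreover have "(1::complex) + of_real (Greal x0) = of_real (1 + Greal x0)" by simp
  ultimately have n1: "norm (1 + Gfun 0 (of_real x0)) \<ge> 1" by (simp only: norm_of_real)
  have "dist (Gfun 0 (alpha t)) (Gfun 0 (of_real x0)) < 1/4"
    using th(6)[OF aR x0R] alpha_near_x0[OF t] th(1) by (simp add: dist_norm)
  moreover have "norm (Gfun t (alpha t) - Gfun 0 (alpha t)) \<le> 1/4"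
    using norm_Gfun_diff_le[OF tdisc_bounds(1)[OF t] aR] tdisc_small(5)[OF t] by simp
  ultimately have "norm (Gfun t (alpha t) - Gfun 0 (of_real x0)) \<le> 1/2"
    using dist_triangle[of "Gfun t (alpha t)" "Gfun 0 (of_real x0)" "Gfun 0 (alpha t)", unfolded dist_norm]
    by (simp add: dist_norm)
  thus ?thesis using n1 norm_triangle_sub[of "1 + Gfun 0 (of_real x0)" "1 + Gfun t (alpha t)"]
    by (simp add: norm_minus_commute)
qed

section \<open>Coefficient asymptotics\<close>

definition A1c :: real where "A1c = Acoef + 1"
definition Sbound :: real where "Sbound = (A1c / (1 - gam * rcomp)) / (1 - gam * rcomp)"

lemma norm_Qps_nth_le: "norm (Qps t $ j) \<le> A1c * gam ^ j" if t: "norm t \<le> tmax" for t j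
proof -
  have g1: "gam ^ j \<ge> 1" using gam_bounds by simp
  have e: "Qps t $ j = (if j = 0 then 1 else 0) - (if j = 1 then 1 else 0) - (if j < r then 0 else Bcoef q r f t (j - r))"
    unfolding Qps_def by (simp add: fps_X_power_mult_nth Bps_def fps_X_nth)
  have b2: "norm (if j < r then 0 else Bcoef q r f t (j - r)) \<le> Acoef * gam ^ j"
  proof (cases "j < r")
    case True thus ?thesis using Acoef_pos g1 by simp
  next
    case False
    have "norm (Bcoef q r f t (j - r)) \<le> Acoef * gam ^ (j - r)" by (rule norm_Bcoef_le[OF t])
    also have "\<dots> \<le> Acoef * gam ^ j" using gam_bounds Acoef_pos by (intro mult_left_mono power_increasing) auto
    finally show ?thesis using False by simp
  qed
  have "norm ((if j = 0 then 1 else 0) - (if j = 1 then 1 else 0) :: complex) \<le> 1" by auto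
  hence "norm (Qps t $ j) \<le> 1 + Acoef * gam ^ j" unfolding e using b2 norm_triangle_ineq4
    by (smt (verit, ccfv_threshold))
  also have "\<dots> \<le> gam ^ j + Acoef * gam ^ j" using g1 by simp
  finally show ?thesis unfolding A1c_def by (simp add: algebra_simps)
qed

(* S = Q / (1 - x / alpha) as a power series; since Q(alpha) = 0 its coefficients are tails of the
   series of Q at alpha, hence O(gam^k). *)
definition Geo :: "complex \<Rightarrow> complex fps" where "Geo t = Abs_fps (\<lambda>k. inverse (alpha t) ^ k)"
definition Sps :: "complex \<Rightarrow> complex fps" where "Sps t = Qps t * Geo t"
definition Sfun :: "complex \<Rightarrow> complex \<Rightarrow> complex" where "Sfun t x = eval_fps (Sps t) x"

lemma alpha_le_rcomp: assumes t: "norm t \<le> tdisc" shows "norm (alpha t) \<le> rcomp" "norm (alpha t) < rconv"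
proof -
  show "norm (alpha t) \<le> rcomp" using alpha_norm_bounds(1)[OF t] th(3) rcomp_bounds unfolding rcauchy_def by simp
  thus "norm (alpha t) < rconv" using rcomp_bounds by simp
qed

lemma Qps_alpha_sums_0: assumes t: "norm t \<le> tdisc" shows "(\<lambda>j. Qps t $ j * alpha t ^ j) sums 0"
proof -
  have tt: "norm t \<le> tmax" using tdisc_bounds(1)[OF t] .
  have "ereal (norm (alpha t)) < fps_conv_radius (Qps t)" using alpha_le_rcomp(2)[OF t] conv_radius_Qps[OF tt] by (intro ereal_le_less)
  hence "(\<lambda>j. Qps t $ j * alpha t ^ j) sums eval_fps (Qps t) (alpha t)" by (rule sums_eval_fps)
  also have "eval_fps (Qps t) (alpha t) = 0" using eval_Qps[OF tt alpha_le_rcomp(2)[OF t]] alpha_root(2)[OF t] by simp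
  finally show ?thesis .
qed

lemma Sps_nth: assumes t: "norm t \<le> tdisc"
  shows "Sps t $ k = - (inverse (alpha t) ^ k * alpha t ^ (k+1) * (\<Sum>j. Qps t $ (j + (k+1)) * alpha t ^ j))"
proof -
  let ?a = "alpha t" and ?c = "inverse (alpha t)"
  have anz: "?a \<noteq> 0" using alpha_norm_bounds(4)[OF t] .
  have sm: "summable (\<lambda>j. Qps t $ j * ?a ^ j)" using Qps_alpha_sums_0[OF t] by (rule sums_summable)
  have "Sps t $ k = (\<Sum>i=0..k. Qps t $ i * ?c ^ (k - i))" unfolding Sps_def Geo_def by (simp add: fps_mult_nth)
  also have "\<dots> = ?c ^ k * (\<Sum>i=0..k. Qps t $ i * ?a ^ i)"
    unfolding sum_distrib_left
  proof (rule sum.cong[OF refl])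
    fix i assume "i \<in> {0..k}"
    hence "?c ^ (k - i) = ?c ^ k * ?a ^ i" using anz by (simp add: power_diff field_simps power_inverse)
    thus "Qps t $ i * ?c ^ (k - i) = ?c ^ k * (Qps t $ i * ?a ^ i)" by simp
  qed
  also have "(\<Sum>i=0..k. Qps t $ i * ?a ^ i) = (\<Sum>i<k+1. Qps t $ i * ?a ^ i)"
    by (intro sum.cong) auto
  also have "\<dots> = - (\<Sum>j. Qps t $ (j + (k+1)) * ?a ^ (j + (k+1)))"
  proof -
    have "(\<Sum>j. Qps t $ j * ?a ^ j) = (\<Sum>j. Qps t $ (j + (k+1)) * ?a ^ (j + (k+1))) + (\<Sum>i<k+1. Qps t $ i * ?a ^ i)"
      by (rule suminf_split_initial_segment[OF sm])
    moreover have "(\<Sum>j. Qps t $ j * ?a ^ j) = 0" using sums_unique[OF Qps_alpha_sums_0[OF t]] by simp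
    ultimately show ?thesis by (simp add: eq_neg_iff_add_eq_0 add.commute)
  qed
  also have "(\<Sum>j. Qps t $ (j + (k+1)) * ?a ^ (j + (k+1))) = ?a ^ (k+1) * (\<Sum>j. Qps t $ (j + (k+1)) * ?a ^ j)"
  proof -
    have "summable (\<lambda>j. Qps t $ (j + (k+1)) * ?a ^ j)"
    proof -
      have "summable (\<lambda>j. Qps t $ (j + (k+1)) * ?a ^ (j + (k+1)))"
        using summable_ignore_initial_segment[OF sm, of "k+1"] by simp
      hence "summable (\<lambda>j. inverse (?a ^ (k+1)) * (Qps t $ (j + (k+1)) * ?a ^ (j + (k+1))))"
        by (rule summable_mult)
      thus ?thesis using anz by (simp add: power_add field_simps)
    qed
    hence "(\<Sum>j. ?a ^ (k+1) * (Qps t $ (j + (k+1)) * ?a ^ j)) = ?a ^ (k+1) * (\<Sum>j. Qps t $ (j + (k+1)) * ?a ^ j)"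
      by (rule suminf_mult)
    thus ?thesis by (simp add: power_add mult_ac)
  qed
  finally show ?thesis by simp
qed

lemma norm_Sps_nth_le: assumes t: "norm t \<le> tdisc" shows "norm (Sps t $ k) \<le> (A1c / (1 - gam * rcomp)) * gam ^ k"
proof -
  let ?a = "alpha t"
  have tt: "norm t \<le> tmax" using tdisc_bounds(1)[OF t] .
  have anz: "?a \<noteq> 0" using alpha_norm_bounds(4)[OF t] .
  have aR: "norm ?a \<le> rcomp" using alpha_le_rcomp(1)[OF t] .
  have g0: "gam \<ge> 0" using gam_bounds by simp
  have cb: "norm (Qps t $ (j + (k+1))) \<le> (A1c * gam ^ (k+1)) * gam ^ j" for j
    using norm_Qps_nth_le[OF tt, of "j + (k+1)"] by (simp add: power_add mult_ac)
  have "norm (\<Sum>j. Qps t $ (j + (k+1)) * ?a ^ j) \<le> (A1c * gam ^ (k+1)) / (1 - gam * rcomp)"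
    by (rule powser_geometric_bound(2)[OF cb g0 aR rcomp_bounds(4)])
  hence "norm (Sps t $ k) \<le> norm (inverse ?a) ^ k * norm ?a ^ (k+1) * ((A1c * gam ^ (k+1)) / (1 - gam * rcomp))"
    unfolding Sps_nth[OF t] norm_minus_cancel norm_mult norm_power
    by (intro mult_left_mono) auto
  also have "norm (inverse ?a) ^ k * norm ?a ^ (k+1) = (inverse (norm ?a) * norm ?a) ^ k * norm ?a"
    by (simp add: norm_inverse power_mult_distrib)
  also have "\<dots> = norm ?a" using anz by simp
  also have "norm ?a * ((A1c * gam ^ (k+1)) / (1 - gam * rcomp)) = (gam * norm ?a) * (A1c / (1 - gam * rcomp)) * gam ^ k"
    by (simp add: field_simps)
  also have "\<dots> \<le> 1 * (A1c / (1 - gam * rcomp)) * gam ^ k"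
  proof (intro mult_right_mono)
    have "gam * norm ?a \<le> gam * rcomp" using aR g0 by (intro mult_left_mono)
    thus "gam * norm ?a \<le> 1" using rcomp_bounds by simp
    show "0 \<le> A1c / (1 - gam * rcomp)" unfolding A1c_def using Acoef_pos rcomp_bounds by simp
  qed (use g0 in auto)
  finally show ?thesis by simp
qed

lemma conv_radius_Sps: assumes t: "norm t \<le> tdisc" shows "ereal rconv \<le> fps_conv_radius (Sps t)"
  unfolding fps_conv_radius_def rconv_def using norm_Sps_nth_le[OF t] gam_bounds
  by (intro conv_radius_ge_geometric[where A="A1c / (1 - gam * rcomp)"]) auto

lemma norm_Sfun_le: assumes t: "norm t \<le> tdisc" and x: "norm x \<le> rcomp" shows "norm (Sfun t x) \<le> Sbound"
  unfolding Sfun_def eval_fps_def Sbound_def using gam_bounds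
  by (intro powser_geometric_bound(2)[OF norm_Sps_nth_le[OF t] _ x rcomp_bounds(4)]) auto

lemma Geo_times_linear: assumes t: "norm t \<le> tdisc"
  shows "Geo t * (1 - fps_const (inverse (alpha t)) * fps_X) = 1"
proof (rule fps_ext)
  fix n show "(Geo t * (1 - fps_const (inverse (alpha t)) * fps_X)) $ n = 1 $ n"
  proof (cases n)
    case 0 thus ?thesis unfolding Geo_def by simp
  next
    case (Suc m)
    have "(Geo t * (1 - fps_const (inverse (alpha t)) * fps_X)) $ n
        = Geo t $ n - inverse (alpha t) * Geo t $ m"
      using Suc by (simp add: algebra_simps fps_mult_fps_X_commute[symmetric] mult.assoc)
    also have "\<dots> = 0" unfolding Geo_def using Suc by simp
    finally show ?thesis using Suc by simp
  qed
qed

lemma Sps_times_linear: assumes t: "norm t \<le> tdisc"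
  shows "Sps t * (1 - fps_const (inverse (alpha t)) * fps_X) = Qps t"
  unfolding Sps_def using Geo_times_linear[OF t] by (simp add: mult.assoc)

lemma Sfun_times_linear: assumes t: "norm t \<le> tdisc" and x: "norm x < rconv"
  shows "Sfun t x * (1 - inverse (alpha t) * x) = Qfun t x"
proof -
  have xs: "ereal (norm x) < fps_conv_radius (Sps t)" using conv_radius_Sps[OF t] x by (intro ereal_le_less)
  have "Qfun t x = eval_fps (Qps t) x" using eval_Qps[OF tdisc_bounds(1)[OF t] x] by simp
  also have "\<dots> = eval_fps (Sps t) x * eval_fps (1 - fps_const (inverse (alpha t)) * fps_X) x"
    unfolding Sps_times_linear[OF t, symmetric] using xs fps_conv_radius_linear by (subst eval_fps_mult) auto
  also have "eval_fps (1 - fps_const (inverse (alpha t)) * fps_X) x = 1 - inverse (alpha t) * x"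
    using fps_conv_radius_const_X by (subst eval_fps_diff) (auto simp: eval_fps_mult)
  finally show ?thesis unfolding Sfun_def by simp
qed

definition rho :: real where "rho = x0 + th / 2"
definition Slow :: real where "Slow = (x0 / 2) * min (m0 / 4) (th / 8) / (2 * rcomp)"
definition Gbound :: real where "Gbound = 1 + Acoef / (1 - gam * rcomp)"
definition Tbound :: real where "Tbound = Gbound / Slow"

lemma rho_bounds: "0 < rho" "rho < x0 + th" "x0 + th \<le> rcomp" "rho \<le> rcomp"
proof -
  show "0 < rho" unfolding rho_def using x0_bounds th by simp
  show "rho < x0 + th" unfolding rho_def using th by simp
  show "x0 + th \<le> rcomp" using th(3) th(1) rcomp_bounds(1) unfolding rcauchy_def by (simp add: field_simps)
  thus "rho \<le> rcomp" unfolding rho_def using th by simp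
qed

lemma Slow_pos: "Slow > 0" unfolding Slow_def using x0_bounds m0(1) th(1) rcomp_bounds by simp
lemma Gbound_pos: "Gbound > 0" unfolding Gbound_def using Acoef_pos rcomp_bounds by (simp add: add_pos_nonneg)

lemma holomorphic_Sfun: assumes t: "norm t \<le> tdisc" shows "Sfun t holomorphic_on ball 0 rconv"
proof -
  have "ball 0 rconv \<subseteq> eball 0 (fps_conv_radius (Sps t))"
    using conv_radius_Sps[OF t] by (auto intro: ereal_le_less)
  thus ?thesis unfolding Sfun_def[abs_def] by (intro holomorphic_intros) auto
qed

lemma Sfun_alpha_nonzero: assumes t: "norm t \<le> tdisc" shows "Sfun t (alpha t) \<noteq> 0"
proof
  assume S0: "Sfun t (alpha t) = 0"
  let ?a = "alpha t" and ?c = "inverse (alpha t)"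
  have anz: "?a \<noteq> 0" using alpha_norm_bounds(4)[OF t] .
  have ab: "?a \<in> ball 0 rconv" using alpha_le_rcomp(2)[OF t] by simp
  have hS: "(Sfun t has_field_derivative deriv (Sfun t) ?a) (at ?a)"
    by (rule holomorphic_derivI[OF holomorphic_Sfun[OF t]]) (use ab in auto)
  have hL: "((\<lambda>x. 1 - ?c * x) has_field_derivative - ?c) (at ?a)"
    by (auto intro!: derivative_eq_intros)
  have "((\<lambda>x. Sfun t x * (1 - ?c * x)) has_field_derivative
          deriv (Sfun t) ?a * (1 - ?c * ?a) + (- ?c) * Sfun t ?a) (at ?a)"
    by (rule DERIV_mult[OF hS hL])
  hence "((\<lambda>x. Sfun t x * (1 - ?c * x)) has_field_derivative 0) (at ?a)"
    using S0 anz by simp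
  hence "(Qfun t has_field_derivative 0) (at ?a)"
  proof (rule has_field_derivative_transform_within_open[where S="ball 0 rconv"])
    fix x :: complex assume "x \<in> ball 0 rconv"
    thus "Sfun t x * (1 - ?c * x) = Qfun t x" using Sfun_times_linear[OF t] by simp
  qed (use ab in auto)
  hence "deriv (Qfun t) ?a = 0" by (rule DERIV_imp_deriv)
  moreover have "norm (deriv (Qfun t) ?a - dQ0) \<le> norm dQ0 / 2" by (rule deriv_Qfun_near_dQ0[OF t alpha_root(1)[OF t]])
  ultimately show False using norm_dQ0_ge by simp
qed

lemma Sfun_nonzero: assumes t: "norm t \<le> tdisc" and x: "norm x \<le> x0 + th" shows "Sfun t x \<noteq> 0"
proof (cases "x = alpha t")
  case True thus ?thesis using Sfun_alpha_nonzero[OF t] by simp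
next
  case False
  have xR: "norm x < rconv" using x rho_bounds rcomp_bounds by simp
  have "Qfun t x \<noteq> 0" using alpha_unique[OF t x] False by auto
  thus ?thesis using Sfun_times_linear[OF t xR] by auto
qed

lemma norm_Sfun_circle_ge: assumes t: "norm t \<le> tdisc" and x: "norm x = rho" shows "norm (Sfun t x) \<ge> Slow"
proof -
  let ?a = "alpha t"
  have anz: "?a \<noteq> 0" using alpha_norm_bounds(4)[OF t] .
  have xR: "norm x < rconv" using x rho_bounds rcomp_bounds by simp
  have xa: "norm (x - ?a) \<ge> th / 4"
    using alpha_norm_bounds(1)[OF t] x norm_triangle_sub[of x ?a] unfolding rho_def by simp
  have lowQ: "norm (Qfun t x) \<ge> min (m0 / 4) (th / 8)"
  proof (cases "x \<in> Droot")
    case True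
    have "norm (Qfun t x) \<ge> norm dQ0 / 2 * norm (x - ?a)" by (rule norm_Qfun_ge_in_Droot[OF t True])
    moreover have "norm dQ0 / 2 * norm (x - ?a) \<ge> 1/2 * (th / 4)"
      using norm_dQ0_ge xa th(1) by (intro mult_mono) auto
    ultimately show ?thesis by simp
  next
    case False
    have "norm x \<le> x0 + th" using x rho_bounds by simp
    thus ?thesis using norm_Qfun_far[OF t _ False] by simp
  qed
  have "1 - inverse ?a * x = (?a - x) / ?a" using anz by (simp add: field_simps)
  hence nl: "norm (1 - inverse ?a * x) = norm (?a - x) / norm ?a" by (simp add: norm_divide)
  have "norm (?a - x) \<le> 2 * rcomp" using norm_triangle_ineq4[of ?a x] alpha_le_rcomp(1)[OF t] x rho_bounds by simp
  hence nl2: "norm (1 - inverse ?a * x) \<le> 2 * rcomp / (x0 / 2)"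
    unfolding nl using alpha_norm_bounds(3)[OF t] x0_bounds rcomp_bounds
    by (intro frac_le) auto
  have Qeq: "norm (Qfun t x) = norm (Sfun t x) * norm (1 - inverse ?a * x)"
    using Sfun_times_linear[OF t xR] norm_mult[of "Sfun t x" "1 - inverse ?a * x"] by simp
  have pos: "2 * rcomp / (x0 / 2) > 0" using rcomp_bounds x0_bounds by simp
  have "min (m0 / 4) (th / 8) \<le> norm (Sfun t x) * (2 * rcomp / (x0 / 2))"
    using lowQ Qeq mult_left_mono[OF nl2 norm_ge_zero[of "Sfun t x"]] by linarith
  hence "min (m0 / 4) (th / 8) / (2 * rcomp / (x0 / 2)) \<le> norm (Sfun t x)"
    by (simp only: pos_divide_le_eq[OF pos])
  moreover have "min (m0 / 4) (th / 8) / (2 * rcomp / (x0 / 2)) = Slow"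
    unfolding Slow_def using rcomp_bounds x0_bounds by (simp add: field_simps)
  ultimately show ?thesis by simp
qed

definition Tfun :: "complex \<Rightarrow> complex \<Rightarrow> complex" where "Tfun t x = (1 + Gfun t x) / Sfun t x"

lemma holomorphic_Tfun: assumes t: "norm t \<le> tdisc" shows "Tfun t holomorphic_on ball 0 (x0 + th)"
proof -
  have sub: "ball 0 (x0 + th) \<subseteq> ball (0::complex) rconv" using rho_bounds rcomp_bounds by auto
  show ?thesis unfolding Tfun_def[abs_def]
    using holomorphic_on_subset[OF holomorphic_Gfun[OF tdisc_bounds(1)[OF t]] sub]
          holomorphic_on_subset[OF holomorphic_Sfun[OF t] sub] Sfun_nonzero[OF t]
    by (intro holomorphic_intros) auto
qed

lemma norm_Tfun_circle_le: assumes t: "norm t \<le> tdisc" and x: "norm x = rho" shows "norm (Tfun t x) \<le> Tbound"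
proof -
  have xR: "norm x \<le> rcomp" using x rho_bounds by simp
  have "norm (1 + Gfun t x) \<le> Gbound"
    unfolding Gbound_def using norm_triangle_ineq[of 1 "Gfun t x"] norm_Gfun_le[OF tdisc_bounds(1)[OF t] xR] by simp
  moreover have "norm (Sfun t x) \<ge> Slow" by (rule norm_Sfun_circle_ge[OF t x])
  ultimately show ?thesis unfolding Tfun_def Tbound_def norm_divide using Slow_pos Gbound_pos
    by (intro frac_le) auto
qed

definition tau :: "complex \<Rightarrow> nat \<Rightarrow> complex" where "tau t n = (deriv ^^ n) (Tfun t) 0 / fact n"

lemma norm_tau_le: assumes t: "norm t \<le> tdisc" shows "norm (tau t n) \<le> Tbound / rho ^ n"
proof -
  have h: "Tfun t holomorphic_on ball 0 (x0 + th)" by (rule holomorphic_Tfun[OF t])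
  have "norm ((deriv ^^ n) (Tfun t) 0) \<le> fact n * Tbound / rho ^ n"
  proof (rule Cauchy_inequality)
    show "Tfun t holomorphic_on ball 0 rho" using h by (rule holomorphic_on_subset) (use rho_bounds in auto)
    show "continuous_on (cball 0 rho) (Tfun t)"
      using holomorphic_on_imp_continuous_on[OF h] by (rule continuous_on_subset) (use rho_bounds in auto)
    show "0 < rho" using rho_bounds by simp
    fix x :: complex assume "norm (0 - x) = rho"
    thus "norm (Tfun t x) \<le> Tbound" using norm_Tfun_circle_le[OF t] by simp
  qed
  thus ?thesis unfolding tau_def by (simp add: norm_divide field_simps)
qed

lemma Qps_nth_0: "Qps t $ 0 = 1" unfolding Qps_def using r1 by (simp add: fps_X_power_mult_nth)

lemma tau_times_Sps: assumes t: "norm t \<le> tdisc" shows "Abs_fps (tau t) * Sps t = 1 + Gps t"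
proof -
  have fe: "fps_expansion (Tfun t) 0 = Abs_fps (tau t)" unfolding fps_expansion_def tau_def by simp
  have e1: "Tfun t has_fps_expansion Abs_fps (tau t)"
    unfolding fe[symmetric] using holomorphic_Tfun[OF t] x0_bounds th(1)
    by (intro has_fps_expansion_fps_expansion[of "ball 0 (x0+th)"]) auto
  have "ereal 0 < fps_conv_radius (Sps t)" by (rule ereal_le_less[OF conv_radius_Sps[OF t] rconv_pos])
  hence rS: "fps_conv_radius (Sps t) > 0" by (simp add: zero_ereal_def)
  have e2: "Sfun t has_fps_expansion Sps t" unfolding Sfun_def[abs_def] using rS by (rule eval_fps_has_fps_expansion)
  have e3: "(\<lambda>x. Tfun t x * Sfun t x) has_fps_expansion Abs_fps (tau t) * Sps t"
    by (rule has_fps_expansion_mult[OF e1 e2])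
  have "ereal 0 < fps_conv_radius (Gps t)" by (rule ereal_le_less[OF conv_radius_Gps[OF tdisc_bounds(1)[OF t]] rconv_pos])
  hence rG: "fps_conv_radius (Gps t) > 0" by (simp add: zero_ereal_def)
  have e4: "(\<lambda>x. 1 + Gfun t x) has_fps_expansion 1 + Gps t"
    unfolding Gfun_def using has_fps_expansion_add[OF has_fps_expansion_1 eval_fps_has_fps_expansion[OF rG]] .
  have ev: "eventually (\<lambda>x. Tfun t x * Sfun t x = 1 + Gfun t x) (nhds 0)"
  proof -
    have "eventually (\<lambda>x. x \<in> ball (0::complex) (x0+th)) (nhds 0)"
      using x0_bounds th(1) by (intro eventually_nhds_in_open) auto
    thus ?thesis
    proof (rule eventually_mono)
      fix x :: complex assume "x \<in> ball 0 (x0+th)"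
      hence "Sfun t x \<noteq> 0" using Sfun_nonzero[OF t] by simp
      thus "Tfun t x * Sfun t x = 1 + Gfun t x" unfolding Tfun_def by simp
    qed
  qed
  have "(\<lambda>x. 1 + Gfun t x) has_fps_expansion Abs_fps (tau t) * Sps t"
    using has_fps_expansion_cong[OF ev refl] e3 by simp
  thus ?thesis using e4 by (rule fps_expansion_unique_complex)
qed

lemma Fcoef_fps_eq_tau_Geo: assumes t: "norm t \<le> tdisc"
  shows "Abs_fps (Fcoef q f t) = Abs_fps (tau t) * Geo t"
proof -
  define U where "U = Abs_fps (Fcoef q f t)"
  define L where "L = 1 - fps_const (inverse (alpha t)) * fps_X"
  have id: "U = 1 + fps_X * U + fps_X^r * (Bps t * U) + Gps t"
    using Fcoef_fps_equation[of t] unfolding U_def Bps_def Gps_def .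
  have UQ: "U * Qps t = 1 + Gps t"
  proof -
    have "U * Qps t = U - fps_X * U - fps_X^r * (Bps t * U)" unfolding Qps_def by (simp add: algebra_simps)
    also have "\<dots> = 1 + Gps t" using id by (simp add: algebra_simps)
    finally show ?thesis .
  qed
  have "(U * L) * Sps t = Abs_fps (tau t) * Sps t"
    using UQ tau_times_Sps[OF t] Sps_times_linear[OF t] unfolding L_def by (simp add: mult_ac)
  moreover have "Sps t \<noteq> 0"
  proof
    assume "Sps t = 0"
    hence "Sps t $ 0 = 0" by simp
    thus False unfolding Sps_def Geo_def using Qps_nth_0 by simp
  qed
  ultimately have UL: "U * L = Abs_fps (tau t)" by simp
  have "U = U * (L * Geo t)" using Geo_times_linear[OF t] unfolding L_def by (simp add: mult.commute)
  also have "\<dots> = Abs_fps (tau t) * Geo t" using UL by (simp add: mult.assoc)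
  finally show ?thesis unfolding U_def .
qed

lemma Fcoef_alpha_power_eq: assumes t: "norm t \<le> tdisc"
  shows "Fcoef q f t k * alpha t ^ k = (\<Sum>i<k+1. tau t i * alpha t ^ i)"
proof -
  have anz: "alpha t \<noteq> 0" using alpha_norm_bounds(4)[OF t] .
  have "Fcoef q f t k = (\<Sum>i=0..k. tau t i * inverse (alpha t) ^ (k - i))"
    using arg_cong[OF Fcoef_fps_eq_tau_Geo[OF t], of "\<lambda>F. F $ k"] unfolding Geo_def by (simp add: fps_mult_nth)
  hence "Fcoef q f t k * alpha t ^ k = (\<Sum>i=0..k. tau t i * inverse (alpha t) ^ (k - i)) * alpha t ^ k"
    by simp
  also have "\<dots> = (\<Sum>i=0..k. tau t i * (inverse (alpha t) ^ (k - i) * alpha t ^ k))"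
    by (simp add: sum_distrib_right mult.assoc)
  also have "\<dots> = (\<Sum>i=0..k. tau t i * alpha t ^ i)"
  proof (rule sum.cong[OF refl])
    fix i assume "i \<in> {0..k}"
    hence "inverse (alpha t) ^ (k - i) * alpha t ^ k = alpha t ^ i"
      using anz by (simp add: power_diff field_simps power_inverse)
    thus "tau t i * (inverse (alpha t) ^ (k - i) * alpha t ^ k) = tau t i * alpha t ^ i" by simp
  qed
  also have "\<dots> = (\<Sum>i<k+1. tau t i * alpha t ^ i)" by (intro sum.cong) auto
  finally show ?thesis .
qed

definition kappa :: "complex \<Rightarrow> complex" where "kappa t = Tfun t (alpha t)"

lemma tau_sums: assumes t: "norm t \<le> tdisc" shows "(\<lambda>n. tau t n * alpha t ^ n) sums kappa t"
proof -
  have ab: "alpha t \<in> ball 0 (x0 + th)" using alpha_norm_bounds(1)[OF t] th(1) by simp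
  have "(\<lambda>n. (deriv ^^ n) (Tfun t) 0 / fact n * (alpha t - 0) ^ n) sums Tfun t (alpha t)"
    by (rule holomorphic_power_series[OF holomorphic_Tfun[OF t] ab])
  thus ?thesis unfolding kappa_def tau_def by simp
qed

definition beta0 :: real where "beta0 = (x0 + th / 4) / rho"
definition Cerr :: real where "Cerr = 2 * Sbound * Tbound / (1 - beta0)"

lemma beta0: "0 < beta0" "beta0 < 1"
  unfolding beta0_def rho_def using x0_bounds th(1) by (auto simp: field_simps)

lemma Sbound_pos: "Sbound > 0" unfolding Sbound_def A1c_def using Acoef_pos rcomp_bounds by simp
lemma Tbound_pos: "Tbound > 0" unfolding Tbound_def using Gbound_pos Slow_pos by simp

lemma norm_tau_tail_le: assumes t: "norm t \<le> tdisc"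
  shows "norm (\<Sum>j. tau t (j + (k+1)) * alpha t ^ (j + (k+1))) \<le> Tbound * beta0 ^ k / (1 - beta0)"
proof -
  let ?a = "alpha t"
  define b where "b = norm ?a / rho"
  have b0: "0 \<le> b" "b \<le> beta0" unfolding b_def beta0_def using alpha_norm_bounds(1)[OF t] rho_bounds
    by (auto intro: divide_right_mono)
  have cb: "norm (tau t (j + (k+1)) * ?a ^ (k+1)) \<le> (Tbound * b ^ (k+1)) * (1/rho) ^ j" for j
  proof -
    have tb: "norm (tau t (j + (k+1))) \<le> Tbound / rho ^ (j + (k+1))" by (rule norm_tau_le[OF t])
    have "norm (tau t (j + (k+1)) * ?a ^ (k+1)) \<le> Tbound / rho ^ (j + (k+1)) * norm ?a ^ (k+1)"
      unfolding norm_mult norm_power by (rule mult_right_mono[OF tb]) simp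
    also have "\<dots> = (Tbound * b ^ (k+1)) * (1/rho) ^ j" unfolding b_def
      by (simp add: power_add power_divide field_simps)
    finally show ?thesis .
  qed
  have g: "(1/rho) * norm ?a < 1" using b0 beta0 unfolding b_def by simp
  have "norm (\<Sum>j. (tau t (j + (k+1)) * ?a ^ (k+1)) * ?a ^ j) \<le> (Tbound * b ^ (k+1)) / (1 - (1/rho) * norm ?a)"
    by (rule powser_geometric_bound(2)[OF cb]) (use rho_bounds g in auto)
  moreover have "(\<lambda>j. (tau t (j + (k+1)) * ?a ^ (k+1)) * ?a ^ j) = (\<lambda>j. tau t (j + (k+1)) * ?a ^ (j + (k+1)))"
    by (simp add: power_add mult_ac)
  ultimately have "norm (\<Sum>j. tau t (j + (k+1)) * ?a ^ (j + (k+1))) \<le> (Tbound * b ^ (k+1)) / (1 - b)"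
    unfolding b_def by simp
  also have "\<dots> \<le> (Tbound * beta0 ^ k) / (1 - beta0)"
  proof (rule frac_le)
    have "b ^ (k+1) \<le> b ^ k" using b0 beta0 by (intro power_decreasing) auto
    also have "\<dots> \<le> beta0 ^ k" using b0 by (intro power_mono) auto
    finally show "Tbound * b ^ (k+1) \<le> Tbound * beta0 ^ k" using Tbound_pos by simp
  qed (use Tbound_pos beta0 b0 in auto)
  finally show ?thesis by simp
qed

lemma norm_kappa_ge: assumes t: "norm t \<le> tdisc" shows "norm (kappa t) \<ge> 1 / (2 * Sbound)"
proof -
  have "norm (1 + Gfun t (alpha t)) \<ge> 1/2" by (rule norm_one_plus_Gfun_alpha_ge[OF t])
  moreover have "norm (Sfun t (alpha t)) \<le> Sbound" by (rule norm_Sfun_le[OF t alpha_le_rcomp(1)[OF t]])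
  moreover have "Sfun t (alpha t) \<noteq> 0" by (rule Sfun_alpha_nonzero[OF t])
  ultimately have "(1/2) / Sbound \<le> norm (1 + Gfun t (alpha t)) / norm (Sfun t (alpha t))"
    using Sbound_pos by (intro frac_le) auto
  thus ?thesis unfolding kappa_def Tfun_def norm_divide by simp
qed

lemma kappa_nonzero: "norm t \<le> tdisc \<Longrightarrow> kappa t \<noteq> 0"
  using norm_kappa_ge Sbound_pos by fastforce

definition err :: "complex \<Rightarrow> nat \<Rightarrow> complex" where
  "err t k = - (\<Sum>j. tau t (j + (k+1)) * alpha t ^ (j + (k+1))) / kappa t"

lemma Fcoef_asymptotics: assumes t: "norm t \<le> tdisc"
  shows "Fcoef q f t k = kappa t * inverse (alpha t) ^ k * (1 + err t k)"
    "norm (err t k) \<le> Cerr * beta0 ^ k"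
proof -
  let ?a = "alpha t"
  have anz: "?a \<noteq> 0" using alpha_norm_bounds(4)[OF t] .
  have knz: "kappa t \<noteq> 0" using kappa_nonzero[OF t] .
  have sm: "summable (\<lambda>n. tau t n * ?a ^ n)" using tau_sums[OF t] by (rule sums_summable)
  have "kappa t = (\<Sum>j. tau t (j + (k+1)) * ?a ^ (j + (k+1))) + (\<Sum>i<k+1. tau t i * ?a ^ i)"
    using suminf_split_initial_segment[OF sm, of "k+1"] sums_unique[OF tau_sums[OF t]] by simp
  hence "Fcoef q f t k * ?a ^ k = kappa t * (1 + err t k)"
    unfolding Fcoef_alpha_power_eq[OF t] err_def using knz by (simp add: field_simps)
  thus "Fcoef q f t k = kappa t * inverse ?a ^ k * (1 + err t k)"
    using anz by (simp add: field_simps power_inverse)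
  have "norm (err t k) \<le> (Tbound * beta0 ^ k / (1 - beta0)) / (1 / (2 * Sbound))"
    unfolding err_def norm_divide norm_minus_cancel using norm_tau_tail_le[OF t] norm_kappa_ge[OF t] Sbound_pos beta0 Tbound_pos
    by (intro frac_le) auto
  also have "\<dots> = Cerr * beta0 ^ k" unfolding Cerr_def by (simp add: field_simps)
  finally show "norm (err t k) \<le> Cerr * beta0 ^ k" .
qed

lemma norm_kappa_le: assumes t: "norm t \<le> tdisc" shows "norm (kappa t) \<le> Tbound / (1 - beta0)"
proof -
  have "norm (kappa t) = norm (\<Sum>n. tau t n * alpha t ^ n)" using sums_unique[OF tau_sums[OF t]] by simp
  also have "\<dots> \<le> Tbound / (1 - (1/rho) * norm (alpha t))"
  proof (rule powser_geometric_bound(2))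
    show "norm (tau t k) \<le> Tbound * (1/rho) ^ k" for k using norm_tau_le[OF t] by (simp add: power_divide)
    show "(1/rho) * norm (alpha t) < 1" using alpha_norm_bounds(1)[OF t] rho_bounds th(1) unfolding rho_def by (simp add: field_simps)
  qed (use rho_bounds in auto)
  also have "\<dots> \<le> Tbound / (1 - beta0)"
  proof -
    have b: "(1/rho) * norm (alpha t) \<le> beta0" unfolding beta0_def using alpha_norm_bounds(1)[OF t] rho_bounds
      by (simp add: divide_right_mono)
    hence p: "0 < 1 - (1/rho) * norm (alpha t)" using beta0 by simp
    show ?thesis
      by (rule divide_left_mono) (use b p Tbound_pos beta0 in auto)
  qed
  finally show ?thesis .
qed

section \<open>Analytic dependence on t\<close>

lemma holomorphic_Fcoef: "(\<lambda>t. Fcoef q f t k) holomorphic_on A"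
  unfolding Fcoef_def fpow_def by (intro holomorphic_intros)

lemma Kerr_ex: "\<exists>K. Cerr * beta0 ^ K \<le> 1/4"
proof -
  have "(\<lambda>k. Cerr * beta0 ^ k) \<longlonglongrightarrow> Cerr * 0" using beta0 by (intro tendsto_mult tendsto_const LIMSEQ_power_zero) auto
  hence "eventually (\<lambda>k. Cerr * beta0 ^ k < 1/4) sequentially" by (intro order_tendstoD(2)) auto
  then obtain N where "\<forall>k\<ge>N. Cerr * beta0 ^ k < 1/4" unfolding eventually_sequentially by blast
  thus ?thesis by (intro exI[of _ N]) auto
qed

definition Kerr :: nat where "Kerr = (SOME K. Cerr * beta0 ^ K \<le> 1/4)"

lemma Kerr: "k \<ge> Kerr \<Longrightarrow> Cerr * beta0 ^ k \<le> 1/4"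
proof -
  assume k: "k \<ge> Kerr"
  have "Cerr * beta0 ^ Kerr \<le> 1/4" unfolding Kerr_def by (rule someI_ex[OF Kerr_ex])
  moreover have "beta0 ^ k \<le> beta0 ^ Kerr" using beta0 k by (intro power_decreasing) auto
  moreover have "Cerr \<ge> 0" unfolding Cerr_def using Sbound_pos Tbound_pos beta0 by simp
  ultimately show ?thesis using mult_left_mono[of "beta0 ^ k" "beta0 ^ Kerr" Cerr] by linarith
qed

lemma norm_err_small: "norm t \<le> tdisc \<Longrightarrow> k \<ge> Kerr \<Longrightarrow> norm (err t k) \<le> 1/4"
  using Fcoef_asymptotics(2) Kerr order_trans by blast

lemma Fcoef_nonzero: assumes t: "norm t \<le> tdisc" and k: "k \<ge> Kerr" shows "Fcoef q f t k \<noteq> 0"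
proof -
  have "1 + err t k \<noteq> 0"
  proof
    assume "1 + err t k = 0"
    hence "err t k = -1" by (simp add: eq_neg_iff_add_eq_0 add.commute)
    thus False using norm_err_small[OF t k] by simp
  qed
  moreover have "kappa t \<noteq> 0" using kappa_nonzero[OF t] .
  moreover have "inverse (alpha t) ^ k \<noteq> 0" using alpha_norm_bounds(4)[OF t] by simp
  ultimately show ?thesis unfolding Fcoef_asymptotics(1)[OF t] by simp
qed

lemma norm_Fcoef_ratio_minus_alpha_le: assumes t: "norm t \<le> tdisc" and k: "k \<ge> Kerr"
  shows "norm (Fcoef q f t k / Fcoef q f t (Suc k) - alpha t) \<le> (8/3 * rcomp * Cerr) * beta0 ^ k"
proof -
  let ?a = "alpha t" and ?R0 = "err t k" and ?R1 = "err t (Suc k)"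
  have anz: "?a \<noteq> 0" using alpha_norm_bounds(4)[OF t] .
  have knz: "kappa t \<noteq> 0" using kappa_nonzero[OF t] .
  have r1: "norm ?R1 \<le> 1/4" using norm_err_small[OF t] k by simp
  have nz1: "1 + ?R1 \<noteq> 0"
  proof
    assume "1 + ?R1 = 0"
    hence "?R1 = -1" by (simp add: eq_neg_iff_add_eq_0 add.commute)
    thus False using r1 by simp
  qed
  define X where "X = kappa t * inverse ?a ^ k"
  have Xnz: "X \<noteq> 0" unfolding X_def using anz knz by simp
  have e0: "Fcoef q f t k = X * (1 + ?R0)" unfolding X_def Fcoef_asymptotics(1)[OF t, of k] ..
  have e1: "Fcoef q f t (Suc k) = X * (inverse ?a * (1 + ?R1))"
    unfolding X_def Fcoef_asymptotics(1)[OF t, of "Suc k"] by (simp add: mult_ac)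
  have "Fcoef q f t k / Fcoef q f t (Suc k) = (1 + ?R0) / (inverse ?a * (1 + ?R1))"
    unfolding e0 e1 using Xnz by simp
  also have "\<dots> = ?a * (1 + ?R0) / (1 + ?R1)" using anz nz1 by (simp add: field_simps)
  finally have "Fcoef q f t k / Fcoef q f t (Suc k) = ?a * (1 + ?R0) / (1 + ?R1)" .
  hence "Fcoef q f t k / Fcoef q f t (Suc k) - ?a = ?a * (?R0 - ?R1) / (1 + ?R1)"
    using nz1 by (simp add: field_simps)
  hence e: "norm (Fcoef q f t k / Fcoef q f t (Suc k) - ?a) = norm ?a * norm (?R0 - ?R1) / norm (1 + ?R1)"
    by (simp add: norm_mult norm_divide)
  have d: "norm (1 + ?R1) \<ge> 3/4" using norm_triangle_sub[of 1 "- ?R1"] r1 by simp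
  have "norm (?R0 - ?R1) \<le> Cerr * beta0 ^ k + Cerr * beta0 ^ Suc k"
    using norm_triangle_ineq4[of ?R0 ?R1] Fcoef_asymptotics(2)[OF t, of k] Fcoef_asymptotics(2)[OF t, of "Suc k"] by linarith
  also have "Cerr * beta0 ^ Suc k \<le> Cerr * beta0 ^ k"
    using beta0 Sbound_pos Tbound_pos unfolding Cerr_def by (intro mult_left_mono power_decreasing) auto
  finally have n: "norm (?R0 - ?R1) \<le> 2 * (Cerr * beta0 ^ k)" by simp
  have "norm ?a * norm (?R0 - ?R1) / norm (1 + ?R1) \<le> rcomp * (2 * (Cerr * beta0 ^ k)) / (3/4)"
  proof -
    have "Cerr \<ge> 0" unfolding Cerr_def using Sbound_pos Tbound_pos beta0 by simp
    hence "0 \<le> rcomp * (Cerr * beta0 ^ k)" using rcomp_bounds beta0 by simp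
    thus ?thesis using alpha_le_rcomp(1)[OF t] n d rcomp_bounds by (intro frac_le mult_mono) auto
  qed
  also have "\<dots> = (8/3 * rcomp * Cerr) * beta0 ^ k" by simp
  finally show ?thesis unfolding e .
qed

lemma holomorphic_alpha: "alpha holomorphic_on ball 0 tdisc"
proof -
  define F where "F = (\<lambda>k t. Fcoef q f t k / Fcoef q f t (Suc k))"
  have ev: "eventually (\<lambda>k. continuous_on (cball 0 tdisc) (F k) \<and> F k holomorphic_on ball 0 tdisc) sequentially"
    using eventually_ge_at_top[of Kerr]
  proof (rule eventually_mono)
    fix k assume k: "k \<ge> Kerr"
    have "F k holomorphic_on cball 0 tdisc" unfolding F_def
      using Fcoef_nonzero k by (intro holomorphic_on_divide holomorphic_Fcoef) auto
    thus "continuous_on (cball 0 tdisc) (F k) \<and> F k holomorphic_on ball 0 tdisc"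
      using holomorphic_on_imp_continuous_on holomorphic_on_subset ball_subset_cball by blast
  qed
  have ul: "uniform_limit (cball 0 tdisc) F alpha sequentially"
    by (rule uniform_limit_geometric_rate[where K=Kerr and B="8/3 * rcomp * Cerr" and bb=beta0])
       (use norm_Fcoef_ratio_minus_alpha_le beta0 in \<open>auto simp: F_def\<close>)
  from holomorphic_uniform_limit[OF ev ul] show ?thesis by auto
qed

lemma holomorphic_kappa: "kappa holomorphic_on ball 0 (tdisc/2)"
proof -
  define F where "F = (\<lambda>k t. Fcoef q f t k * alpha t ^ k)"
  have hF: "F k holomorphic_on ball 0 tdisc" for k
    unfolding F_def using holomorphic_alpha by (intro holomorphic_intros holomorphic_Fcoef)
  have ev: "eventually (\<lambda>k. continuous_on (cball 0 (tdisc/2)) (F k) \<and> F k holomorphic_on ball 0 (tdisc/2)) sequentially"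
  proof (rule always_eventually, intro allI conjI)
    fix k
    have sub: "cball 0 (tdisc/2) \<subseteq> ball (0::complex) tdisc" using tdisc_pos by auto
    show "continuous_on (cball 0 (tdisc/2)) (F k)"
      using holomorphic_on_imp_continuous_on[OF hF] sub by (rule continuous_on_subset)
    show "F k holomorphic_on ball 0 (tdisc/2)" using hF by (rule holomorphic_on_subset) (use sub in auto)
  qed
  have b: "norm (F k t - kappa t) \<le> (Tbound / (1 - beta0) * Cerr) * beta0 ^ k" if t: "t \<in> cball 0 (tdisc/2)" for k t
  proof -
    have tt: "norm t \<le> tdisc" using t tdisc_pos by simp
    have anz: "alpha t \<noteq> 0" using alpha_norm_bounds(4)[OF tt] .
    have "F k t - kappa t = kappa t * err t k" unfolding F_def Fcoef_asymptotics(1)[OF tt, of k] using anz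
      by (simp add: field_simps power_inverse)
    hence "norm (F k t - kappa t) = norm (kappa t) * norm (err t k)" by (simp add: norm_mult)
    also have "\<dots> \<le> Tbound / (1 - beta0) * (Cerr * beta0 ^ k)"
      using norm_kappa_le[OF tt] Fcoef_asymptotics(2)[OF tt] Tbound_pos beta0 by (intro mult_mono) auto
    finally show ?thesis by simp
  qed
  have ul: "uniform_limit (cball 0 (tdisc/2)) F kappa sequentially"
    by (rule uniform_limit_geometric_rate[where K=0 and B="Tbound / (1 - beta0) * Cerr" and bb=beta0]) (use b beta0 in auto)
  from holomorphic_uniform_limit[OF ev ul] show ?thesis by auto
qed

lemma analytic_alpha: "alpha analytic_on cball 0 (tdisc/4)"
proof -
  have "alpha analytic_on ball 0 tdisc" using holomorphic_alpha by (simp add: analytic_on_open)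
  thus ?thesis by (rule analytic_on_subset) (use tdisc_pos in auto)
qed

lemma analytic_kappa: "kappa analytic_on cball 0 (tdisc/4)"
proof -
  have "kappa analytic_on ball 0 (tdisc/2)" using holomorphic_kappa by (simp add: analytic_on_open)
  thus ?thesis by (rule analytic_on_subset) (use tdisc_pos in auto)
qed

lemma alpha_below_conv_radius: assumes t: "norm t \<le> tdisc"
  shows "ereal (norm (alpha t)) < conv_radius (Bcoef q r f t)"
proof -
  have "ereal rconv \<le> conv_radius (Bcoef q r f t)"
    using conv_radius_Bps[OF tdisc_bounds(1)[OF t]] unfolding Bps_def fps_conv_radius_def by simp
  thus ?thesis using alpha_le_rcomp(2)[OF t] by (rule ereal_le_less)
qed

lemma alpha_solves: assumes t: "norm t \<le> tdisc"
  shows "alpha t + alpha t ^ r * Bfun q r f (alpha t) t = 1"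
  using alpha_root(2)[OF t] unfolding Qfun_def by (simp add: algebra_simps)

lemma alpha_isolated: assumes t: "norm t \<le> tdisc"
    and x: "norm x \<le> norm (alpha t) / beta0" and eq: "x + x ^ r * Bfun q r f x t = 1"
  shows "x = alpha t"
proof (rule alpha_unique[OF t])
  have "norm (alpha t) / beta0 \<le> (x0 + th / 4) / beta0"
    using alpha_norm_bounds(1)[OF t] beta0 by (simp add: divide_right_mono)
  also have "\<dots> = rho" unfolding beta0_def using x0_bounds th(1) rho_bounds by simp
  finally show "norm x \<le> x0 + th" using x rho_bounds by simp
  show "Qfun t x = 0" using eq unfolding Qfun_def by (simp add: algebra_simps)
qed

lemma Fcoef_asymptotic_expansion:
  "\<exists>\<delta> \<epsilon> :: real. \<delta> > 0 \<and> \<epsilon> > 0 \<and>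
    (\<exists>\<alpha> \<kappa> :: complex \<Rightarrow> complex.
      \<alpha> analytic_on cball 0 \<delta> \<and> \<kappa> analytic_on cball 0 \<delta> \<and>
      (\<forall>t. norm t \<le> \<delta> \<longrightarrow> \<kappa> t \<noteq> 0) \<and>
      (\<forall>t. norm t \<le> \<delta> \<longrightarrow>
         ereal (norm (\<alpha> t)) < conv_radius (Bcoef q r f t) \<and>
         \<alpha> t + \<alpha> t ^ r * Bfun q r f (\<alpha> t) t = 1 \<and>
         (\<forall>x. norm x \<le> (1 + \<epsilon>) * norm (\<alpha> t) \<and>
              summable (\<lambda>k. Bcoef q r f t k * x ^ k) \<and>
              x + x ^ r * Bfun q r f x t = 1 \<longrightarrow> x = \<alpha> t)) \<and>
      (\<exists>C K. \<forall>t k. norm t \<le> \<delta> \<and> k \<ge> K \<longrightarrow>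
         (\<exists>R. Fcoef q f t k = \<kappa> t * inverse (\<alpha> t) ^ k * (1 + R) \<and>
              norm R \<le> C * inverse (1 + \<epsilon>) ^ k)))"
proof -
  define \<epsilon> where "\<epsilon> = 1 / beta0 - 1"
  have eps: "\<epsilon> > 0" "1 + \<epsilon> = 1 / beta0" "inverse (1 + \<epsilon>) = beta0"
    unfolding \<epsilon>_def using beta0 by (auto simp: field_simps)
  have t4: "norm t \<le> tdisc" if "norm t \<le> tdisc / 4" for t using that tdisc_pos by simp
  have "\<forall>t k. norm t \<le> tdisc / 4 \<and> k \<ge> 0 \<longrightarrow>
      (\<exists>R. Fcoef q f t k = kappa t * inverse (alpha t) ^ k * (1 + R) \<and> norm R \<le> Cerr * inverse (1 + \<epsilon>) ^ k)"
    using Fcoef_asymptotics t4 unfolding eps(3) by blast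
  moreover have "ereal (norm (alpha t)) < conv_radius (Bcoef q r f t) \<and>
         alpha t + alpha t ^ r * Bfun q r f (alpha t) t = 1 \<and>
         (\<forall>x. norm x \<le> (1 + \<epsilon>) * norm (alpha t) \<and>
              summable (\<lambda>k. Bcoef q r f t k * x ^ k) \<and>
              x + x ^ r * Bfun q r f x t = 1 \<longrightarrow> x = alpha t)" if "norm t \<le> tdisc / 4" for t
    using alpha_below_conv_radius[OF t4] alpha_solves[OF t4] alpha_isolated[OF t4] eps(2) that
    by simp
  ultimately show ?thesis
    using tdisc_pos eps(1) analytic_alpha analytic_kappa kappa_nonzero[OF t4]
    by (intro exI[of _ \<epsilon>, THEN exI[of _ "tdisc / 4"]]) (simp, blast)
qed

end

section \<open>Polynomially bounded functions\<close>

lemma abs_ln_le_of_powr_bounds: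
  fixes x y c C1 C2 :: real
  assumes x: "x > 0" and y: "y \<ge> 1" and C: "C1 > 0" "C2 > 0" and c: "c \<ge> 0"
    and up: "x \<le> C1 * y powr c" and lo: "C2 * y powr (-c) \<le> x"
  shows "\<bar>ln x\<bar> \<le> \<bar>ln C1\<bar> + \<bar>ln C2\<bar> + c * ln y"
proof -
  have "ln x \<le> ln (C1 * y powr c)" using up x by simp
  also have "\<dots> = ln C1 + c * ln y" using C y by (simp add: ln_mult ln_powr)
  finally have u: "ln x \<le> ln C1 + c * ln y" .
  have "ln (C2 * y powr (-c)) \<le> ln x" using lo x C y by simp
  moreover have "ln (C2 * y powr (-c)) = ln C2 - c * ln y" using C y by (simp add: ln_mult ln_powr)
  ultimately have l: "ln C2 - c * ln y \<le> ln x" by simp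
  have "c * ln y \<ge> 0" using c y by simp
  thus ?thesis using u l by linarith
qed

lemma eventually_abs_ln_le:
  fixes f :: "nat \<Rightarrow> real" and c :: real
  assumes fpos: "\<And>n. f n > 0" and c: "c \<ge> 0"
    and upper: "f \<in> O(\<lambda>n. real n powr c)" and lower: "f \<in> \<Omega>(\<lambda>n. real n powr (- c))"
  shows "\<exists>C. eventually (\<lambda>n. \<bar>ln (f n)\<bar> \<le> C + c * ln (real n)) at_top"
proof -
  obtain C1 where C1: "C1 > 0" "eventually (\<lambda>n. norm (f n) \<le> C1 * norm (real n powr c)) at_top"
    using landau_o.bigE[OF upper] by blast
  obtain C2 where C2: "C2 > 0" "eventually (\<lambda>n. C2 * norm (real n powr (-c)) \<le> norm (f n)) at_top"
    using landau_omega.bigE[OF lower] by blast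
  have "eventually (\<lambda>n. \<bar>ln (f n)\<bar> \<le> (\<bar>ln C1\<bar> + \<bar>ln C2\<bar>) + c * ln (real n)) at_top"
    using C1(2) C2(2) eventually_ge_at_top[of 1]
  proof eventually_elim
    case (elim n)
    thus ?case using abs_ln_le_of_powr_bounds[OF fpos _ C1(1) C2(1) c] fpos[of n] by simp
  qed
  thus ?thesis by blast
qed

lemma log_f_linear_bound:
  fixes q :: nat and f :: "nat \<Rightarrow> real" and c :: real
  assumes q: "q \<ge> 2" and fpos: "\<And>n. f n > 0" and c: "c \<ge> 0"
    and upper: "f \<in> O(\<lambda>n. real n powr c)" and lower: "f \<in> \<Omega>(\<lambda>n. real n powr (- c))"
  shows "\<exists>a0 b0. a0 \<ge> 0 \<and> b0 \<ge> 0 \<and> (\<forall>k n. n < q^k \<longrightarrow> \<bar>ln (f n)\<bar> \<le> a0 + b0 * real k)"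
proof -
  obtain C N where CN: "\<And>n. n \<ge> N \<Longrightarrow> \<bar>ln (f n)\<bar> \<le> C + c * ln (real n)"
    using eventually_abs_ln_le[OF fpos c upper lower] unfolding eventually_at_top_linorder by blast
  define a0 where "a0 = (\<Sum>n<N. \<bar>ln (f n)\<bar>) + \<bar>C\<bar>"
  define b0 where "b0 = c * ln (real q)"
  have a0: "a0 \<ge> 0" unfolding a0_def by (simp add: sum_nonneg)
  have b0: "b0 \<ge> 0" unfolding b0_def using c q by simp
  have "\<bar>ln (f n)\<bar> \<le> a0 + b0 * real k" if nk: "n < q^k" for k n
  proof (cases "n < N")
    case True
    hence "\<bar>ln (f n)\<bar> \<le> (\<Sum>n<N. \<bar>ln (f n)\<bar>)" by (intro member_le_sum) auto
    thus ?thesis unfolding a0_def using b0 by (simp add: add_increasing2)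
  next
    case False
    have "c * ln (real n) \<le> b0 * real k"
    proof (cases "n = 0")
      case False
      have "real n < real q ^ k" using nk by (metis of_nat_less_iff of_nat_power)
      hence "ln (real n) \<le> real k * ln (real q)" using False q by (simp add: ln_realpow[symmetric])
      thus ?thesis unfolding b0_def using c by (simp add: mult_left_mono mult_ac)
    qed (use b0 in simp)
    moreover have "(\<Sum>n<N. \<bar>ln (f n)\<bar>) \<ge> 0" by (simp add: sum_nonneg)
    ultimately show ?thesis using CN[of n] False unfolding a0_def by linarith
  qed
  thus ?thesis using a0 b0 by blast
qed

theorem lemma13:
  fixes q r :: nat and f :: "nat \<Rightarrow> real" and c :: real
  assumes q: "q \<ge> 2" and r: "r \<ge> 1"
    and fpos: "\<And>n. f n > 0"
    and qm: "quasimult q r f"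
    and c: "c \<ge> 0"
    and upper: "f \<in> O(\<lambda>n. real n powr c)"
    and lower: "f \<in> \<Omega>(\<lambda>n. real n powr (- c))"
  shows "\<exists>\<delta> \<epsilon> :: real. \<delta> > 0 \<and> \<epsilon> > 0 \<and>
    (\<exists>\<alpha> \<kappa> :: complex \<Rightarrow> complex.
      \<alpha> analytic_on cball 0 \<delta> \<and> \<kappa> analytic_on cball 0 \<delta> \<and>
      (\<forall>t. norm t \<le> \<delta> \<longrightarrow> \<kappa> t \<noteq> 0) \<and>
      (\<forall>t. norm t \<le> \<delta> \<longrightarrow>
         ereal (norm (\<alpha> t)) < conv_radius (Bcoef q r f t) \<and>
         \<alpha> t + \<alpha> t ^ r * Bfun q r f (\<alpha> t) t = 1 \<and>
         (\<forall>x. norm x \<le> (1 + \<epsilon>) * norm (\<alpha> t) \<and>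
              summable (\<lambda>k. Bcoef q r f t k * x ^ k) \<and>
              x + x ^ r * Bfun q r f x t = 1 \<longrightarrow> x = \<alpha> t)) \<and>
      (\<exists>C K. \<forall>t k. norm t \<le> \<delta> \<and> k \<ge> K \<longrightarrow>
         (\<exists>R. Fcoef q f t k = \<kappa> t * inverse (\<alpha> t) ^ k * (1 + R) \<and>
              norm R \<le> C * inverse (1 + \<epsilon>) ^ k)))"
proof -
  obtain a0 b0 where ab: "a0 \<ge> 0" "b0 \<ge> 0" "\<forall>k n. n < q^k \<longrightarrow> \<bar>ln (f n)\<bar> \<le> a0 + b0 * real k"
    using log_f_linear_bound[OF q fpos c upper lower] by blast
  interpret quasimult_log_bounded q r f a0 b0
    by unfold_locales (use q r fpos qm ab in auto)
  show ?thesis by (rule Fcoef_asymptotic_expansion)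
qed

end
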